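(* For every simplicial complex $\Delta$ on a finite vertex set $[m]$ one has $\mathrm{Inc}(\mathcal{C}(\Delta))\subseteq\mathcal{C}(\mathrm{Inc}(\Delta))$.
   Context: $\mathbb{N}=\{1,2,3,\dots\}$, $[m]=\{1,\dots,m\}$. A simplicial complex on $[m]$ is a collection of subsets of $[m]$ closed under taking subsets. For $d\ge1$, $F_d(\Delta)$ is the set of $d$-element faces of $\Delta$, viewed in $\binom{\mathbb{N}}{d}$ (the $d$-subsets of $\mathbb{N}$, written $\mathbf{u}=(u_1,\dots,u_d)$ with $u_1<\cdots<u_d$). Squashed order: $\mathbf{u}<\mathbf{v}$ iff the largest element of the symmetric difference of $\mathbf u,\mathbf v$ lies in $\mathbf{v}$. For finite $\mathcal{F}\subseteq\binom{\mathbb{N}}{d}$, $\mathcal{C}(\mathcal{F})$ is the set of the $|\mathcal{F}|$ smallest elements of $\binom{\mathbb{N}}{d}$ in the squashed order; for a simplicial complex, $\mathcal{C}(\Delta)=\bigcup_{d\ge1}\mathcal{C}(F_d(\Delta))$ (together with the empty face). $\mathrm{Inc}_1$ is the set of maps $\pi\colon\mathbb{N}\to\mathbb{N}$ with $\pi(j)<\pi(j+1)$ and $\pi(j)\le j+1$ for all $j$, acting by $\pi(\mathbf{u})=(\pi(u_1),\ldots,\pi(u_d))$; $\mathrm{Inc}(\mathcal{F})=\{\pi(\mathbf{u})\mid\mathbf{u}\in\mathcal{F},\pi\in\mathrm{Inc}_1\}$ and $\mathrm{Inc}(\Delta)=\bigcup_{d\ge1}\mathrm{Inc}(F_d(\Delta))$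 (together with the empty face). *)

theory Defs
  imports Main
begin

definition simplicial_complex_on :: "nat \<Rightarrow> nat set set \<Rightarrow> bool" where
  "simplicial_complex_on m \<Delta> \<longleftrightarrow>
     (\<forall>F\<in>\<Delta>. F \<subseteq> {1..m}) \<and> (\<forall>F\<in>\<Delta>. \<forall>G. G \<subseteq> F \<longrightarrow> G \<in> \<Delta>)"

definition dsets :: "nat \<Rightarrow> nat set set" where
  "dsets d = {u. finite u \<and> card u = d \<and> 0 \<notin> u}"

definition faces :: "nat \<Rightarrow> nat set set \<Rightarrow> nat set set" where
  "faces d \<Delta> = {F \<in> \<Delta>. finite F \<and> card F = d}"

definition sq_less :: "nat set \<Rightarrow> nat set \<Rightarrow> bool" where
  "sq_less u v \<longleftrightarrow> u \<noteq> v \<and> Max ((u - v) \<union> (v - u)) \<in> v"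

text \<open>C(F): the |F| smallest elements of dsets d in squashed order, i.e. those
  elements having fewer than |F| predecessors.\<close>
definition compr :: "nat \<Rightarrow> nat set set \<Rightarrow> nat set set" where
  "compr d \<F> = {u \<in> dsets d. card {v \<in> dsets d. sq_less v u} < card \<F>}"

definition compr_cx :: "nat set set \<Rightarrow> nat set set" where
  "compr_cx \<Delta> = {{}} \<union> (\<Union>d\<in>{1..}. compr d (faces d \<Delta>))"

definition Inc1 :: "(nat \<Rightarrow> nat) set" where
  "Inc1 = {\<pi>. \<forall>j\<ge>1. 1 \<le> \<pi> j \<and> \<pi> j < \<pi> (Suc j) \<and> \<pi> j \<le> j + 1}"

definition IncF :: "nat set set \<Rightarrow> nat set set" where
  "IncF \<F> = {\<pi> ` u | u \<pi>. u \<in> \<F> \<and> \<pi> \<in> Inc1}"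

definition Inc_cx :: "nat set set \<Rightarrow> nat set set" where
  "Inc_cx \<Delta> = {{}} \<union> (\<Union>d\<in>{1..}. IncF (faces d \<Delta>))"

end

theory Submission
  imports Defs
begin

text \<open>A \<open>d\<close>-subset \<open>u\<^sub>1 < \<dots> < u\<^sub>d\<close> of \<open>[m]\<close> is encoded by the exponent vector
  \<open>(u\<^sub>1 - 1, u\<^sub>2 - u\<^sub>1 - 1, \<dots>, u\<^sub>d - u\<^sub>d\<^sub>-\<^sub>1 - 1, m - u\<^sub>d)\<close> of a monomial of degree
  \<open>m - d\<close> in \<open>d + 1\<close> variables. Under this encoding the squashed order becomes the reverse
  lexicographic order, compressed families become initial revlex segments, and applying \<open>Inc\<^sub>1\<close>
  to a family means taking its upper shadow (multiplying by all variables). The statement is thus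
  Macaulay's theorem that revlex segments have the smallest upper shadow among monomial sets of the
  same size. That theorem is proved by induction on the number of variables: with four or more
  variables by Clements--Lindstrom compression along each coordinate, and directly with at most
  three.\<close>

lemma sum_less_sum_if_all_less:
  fixes f :: "'a \<Rightarrow> nat"
  assumes fin: "finite U" "finite V" and card_eq: "card U = card V" and ne: "U \<noteq> {}"
    and less: "\<And>u v. u \<in> U \<Longrightarrow> v \<in> V \<Longrightarrow> f u < f v"
  shows "sum f U < sum f V"
proof -
  define M where "M = Max (f ` U)"
  have "M \<in> f ` U" unfolding M_def using fin ne by simp
  then have "M < f v" if "v \<in> V" for v using less that by blast
  moreover have "V \<noteq> {}" using card_eq ne fin by auto
  ultimately have "(\<Sum>_\<in>V. M) < sum f V" using fin by (intro sum_strict_mono) auto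
  moreover have "sum f U \<le> (\<Sum>_\<in>U. M)" unfolding M_def using fin by (intro sum_mono) simp
  ultimately show ?thesis using card_eq by simp
qed

locale finite_strict_linorder =
  fixes X :: "'a set" and less :: "'a \<Rightarrow> 'a \<Rightarrow> bool"
  assumes finite_carrier: "finite X"
    and irrefl: "\<And>x. \<not> less x x"
    and trans: "\<And>x y z. less x y \<Longrightarrow> less y z \<Longrightarrow> less x z"
    and total: "\<And>x y. x \<in> X \<Longrightarrow> y \<in> X \<Longrightarrow> x \<noteq> y \<Longrightarrow> less x y \<or> less y x"
begin

definition rank :: "'a \<Rightarrow> nat" where
  "rank x = card {y\<in>X. less y x}"

definition initial_seg :: "nat \<Rightarrow> 'a set" where
  "initial_seg s = {x\<in>X. rank x < s}"

definition down_closed :: "'a set \<Rightarrow> bool" where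
  "down_closed S \<longleftrightarrow> S \<subseteq> X \<and> (\<forall>x y. y \<in> S \<longrightarrow> x \<in> X \<longrightarrow> less x y \<longrightarrow> x \<in> S)"

lemma rank_less_rank:
  assumes "less x y" "x \<in> X"
  shows "rank x < rank y"
proof -
  have "{z\<in>X. less z x} \<subset> {z\<in>X. less z y}"
    using assms trans irrefl by blast
  then show ?thesis
    unfolding rank_def by (rule psubset_card_mono[rotated]) (use finite_carrier in auto)
qed

lemma inj_on_rank: "inj_on rank X"
proof (rule inj_onI)
  fix x y assume "x \<in> X" "y \<in> X" "rank x = rank y"
  then show "x = y"
    using total[of x y] rank_less_rank[of x y] rank_less_rank[of y x] by (metis less_irrefl)
qed

lemma rank_image: "rank ` X = {..<card X}"
proof (rule card_subset_eq[OF finite_lessThan])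
  show "rank ` X \<subseteq> {..<card X}"
  proof
    fix r assume "r \<in> rank ` X"
    then obtain x where "x \<in> X" "r = rank x" by blast
    then have "{y\<in>X. less y x} \<subset> X" using irrefl by blast
    then show "r \<in> {..<card X}"
      unfolding \<open>r = rank x\<close> rank_def using finite_carrier by (simp add: psubset_card_mono)
  qed
  show "card (rank ` X) = card {..<card X}"
    using card_image[OF inj_on_rank] by simp
qed

lemma initial_seg_subset: "initial_seg s \<subseteq> X"
  unfolding initial_seg_def by auto

lemma finite_initial_seg: "finite (initial_seg s)"
  using initial_seg_subset finite_carrier finite_subset by blast

lemma initial_seg_mono: "s \<le> t \<Longrightarrow> initial_seg s \<subseteq> initial_seg t"
  unfolding initial_seg_def by auto

lemma initial_seg_Un: "initial_seg s \<union> initial_seg t = initial_seg (max s t)"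
  unfolding initial_seg_def by auto

lemma card_initial_seg: "card (initial_seg s) = min s (card X)"
proof -
  have "rank ` initial_seg s = rank ` X \<inter> {..<s}"
    unfolding initial_seg_def by blast
  then have "rank ` initial_seg s = {..<min s (card X)}"
    unfolding rank_image by (auto simp: lessThan_Int_lessThan min.commute)
  moreover have "inj_on rank (initial_seg s)"
    using inj_on_rank initial_seg_subset by (rule inj_on_subset)
  ultimately show ?thesis
    using card_image by (metis card_lessThan)
qed

lemma down_closed_initial_seg: "down_closed (initial_seg s)"
  unfolding down_closed_def initial_seg_def using rank_less_rank less_trans by blast

lemma down_closed_eq_initial_seg:
  assumes "down_closed S"
  shows "S = initial_seg (card S)"
proof -
  have SX: "S \<subseteq> X" using assms down_closed_def by auto
  have finS: "finite S" using SX finite_carrier finite_subset by blast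
  have "S \<subseteq> initial_seg (card S)"
  proof
    fix x assume xS: "x \<in> S"
    have "{y\<in>X. less y x} \<subseteq> S - {x}"
      using assms xS irrefl unfolding down_closed_def by auto
    then have "rank x \<le> card (S - {x})"
      unfolding rank_def using finS by (simp add: card_mono)
    also have "\<dots> < card S" by (rule card_Diff1_less[OF finS xS])
    finally show "x \<in> initial_seg (card S)" using xS SX unfolding initial_seg_def by blast
  qed
  moreover have "card (initial_seg (card S)) = card S"
    using card_initial_seg card_mono[OF finite_carrier SX] by simp
  ultimately show ?thesis using card_subset_eq[OF finite_initial_seg] by metis
qed

lemma card_Un_down_closed:
  assumes "down_closed A" "down_closed B"
  shows "card (A \<union> B) = max (card A) (card B)"
proof -
  from down_closed_eq_initial_seg[OF assms(1)] down_closed_eq_initial_seg[OF assms(2)]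
  have "A \<union> B = initial_seg (card A) \<union> initial_seg (card B)"
    by (rule arg_cong2)
  then have "A \<union> B = initial_seg (max (card A) (card B))"
    using initial_seg_Un by simp
  moreover have "card A \<le> card X" "card B \<le> card X"
    using assms unfolding down_closed_def by (auto intro: card_mono finite_carrier)
  ultimately show ?thesis using card_initial_seg by simp
qed

lemma sum_down_closed_le:
  fixes f :: "'a \<Rightarrow> nat"
  assumes B: "B \<subseteq> Y" "\<forall>x y. y \<in> B \<longrightarrow> x \<in> Y \<longrightarrow> less x y \<longrightarrow> x \<in> B"
    and A: "A \<subseteq> Y" and Y: "Y \<subseteq> X" and card_eq: "card A = card B"
    and mono: "\<And>x y. x \<in> X \<Longrightarrow> y \<in> X \<Longrightarrow> less x y \<Longrightarrow> f x < f y"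
  shows "sum f B \<le> sum f A" and "A \<noteq> B \<Longrightarrow> sum f B < sum f A"
proof -
  have finA: "finite A" and finB: "finite B"
    using A B Y finite_carrier by (meson finite_subset subset_trans)+
  have below: "f b < f a" if b: "b \<in> B - A" and a: "a \<in> A - B" for a b
  proof -
    have "a \<noteq> b" using a b by auto
    moreover have "\<not> less a b" using B a b A by blast
    ultimately have "less b a" using total[of a b] a b A B Y by blast
    then show "f b < f a" using mono a b A B Y by blast
  qed
  have card_diff: "card (B - A) = card (A - B)"
    using card_eq finA finB by (metis Int_commute card_Diff_subset_Int finite_Int)
  have split: "sum f B = sum f (B - A) + sum f (A \<inter> B)" "sum f A = sum f (A - B) + sum f (A \<inter> B)"
    using sum.Int_Diff[OF finB, of f A] sum.Int_Diff[OF finA, of f B] by (simp_all add: Int_commute)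
  show "sum f B \<le> sum f A"
  proof (cases "B - A = {}")
    case True
    then have "card (A - B) = 0" using card_diff by (simp only: card.empty)
    then have "A - B = {}" using finA by simp
    then have "A = B" using True by blast
    then show ?thesis by simp
  next
    case False
    have "sum f (B - A) < sum f (A - B)"
      using finA finB card_diff False below by (intro sum_less_sum_if_all_less) auto
    then show ?thesis unfolding split by simp
  qed
  assume "A \<noteq> B"
  then have "B - A \<noteq> {}"
    using card_subset_eq[OF finA, of B] card_eq by auto
  then have "sum f (B - A) < sum f (A - B)"
    using finA finB card_diff below by (intro sum_less_sum_if_all_less) auto
  then show "sum f B < sum f A" unfolding split by simp
qed

end

fun revlex_less :: "nat list \<Rightarrow> nat list \<Rightarrow> bool" where
  "revlex_less (x # xs) (y # ys) \<longleftrightarrow> revlex_less xs ys \<or> (xs = ys \<and> y < x)"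
| "revlex_less _ _ \<longleftrightarrow> False"

lemma revlex_less_irrefl: "\<not> revlex_less xs xs"
  by (induction xs) auto

lemma revlex_less_trans: "revlex_less xs ys \<Longrightarrow> revlex_less ys zs \<Longrightarrow> revlex_less xs zs"
proof (induction xs arbitrary: ys zs)
  case (Cons x xs)
  then obtain y ys' z zs' where "ys = y # ys'" "zs = z # zs'"
    by (cases ys; cases zs) auto
  then show ?case using Cons by auto
qed simp

lemma revlex_less_total:
  "length xs = length ys \<Longrightarrow> xs \<noteq> ys \<Longrightarrow> revlex_less xs ys \<or> revlex_less ys xs"
proof (induction xs arbitrary: ys)
  case (Cons x xs)
  then obtain y ys' where "ys = y # ys'" by (cases ys) auto
  then show ?case using Cons by (cases "xs = ys'") auto
qed simp

lemma revlex_less_append: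
  "length u = length u' \<Longrightarrow>
    revlex_less (u @ v) (u' @ v') \<longleftrightarrow> revlex_less v v' \<or> (v = v' \<and> revlex_less u u')"
proof (induction u arbitrary: u')
  case (Cons a us)
  then obtain b us' where "u' = b # us'" "length us = length us'" by (cases u') auto
  then show ?case using Cons.IH by auto
qed (auto simp: revlex_less_irrefl)

definition monomials :: "nat \<Rightarrow> nat \<Rightarrow> nat list set" where
  "monomials n d = {xs. length xs = n \<and> sum_list xs = d}"

lemma finite_monomials: "finite (monomials n d)"
proof -
  have "monomials n d \<subseteq> {xs. set xs \<subseteq> {..d} \<and> length xs = n}"
    unfolding monomials_def using member_le_sum_list by fastforce
  moreover have "finite {xs. set xs \<subseteq> {..d} \<and> length xs = n}"
    by (rule finite_lists_length_eq) simp
  ultimately show ?thesis by (rule finite_subset)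
qed

lemma nth_le_degree: "xs \<in> monomials n d \<Longrightarrow> k < n \<Longrightarrow> xs ! k \<le> d"
  unfolding monomials_def using member_le_sum_list[of "xs ! k" xs] by auto

interpretation revlex: finite_strict_linorder "monomials n d" revlex_less for n d
proof
  show "finite (monomials n d)" by (rule finite_monomials)
qed (auto simp: revlex_less_irrefl monomials_def intro: revlex_less_trans dest: revlex_less_total)

abbreviation revlex_seg :: "nat \<Rightarrow> nat \<Rightarrow> nat \<Rightarrow> nat list set" where
  "revlex_seg n d \<equiv> finite_strict_linorder.initial_seg (monomials n d) revlex_less"

abbreviation revlex_rank :: "nat \<Rightarrow> nat \<Rightarrow> nat list \<Rightarrow> nat" where
  "revlex_rank n d \<equiv> finite_strict_linorder.rank (monomials n d) revlex_less"

abbreviation revlex_closed :: "nat \<Rightarrow> nat \<Rightarrow> nat list set \<Rightarrow> bool" where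
  "revlex_closed n d \<equiv> finite_strict_linorder.down_closed (monomials n d) revlex_less"

lemma revlex_seg_downward:
  "x \<in> revlex_seg n d s \<Longrightarrow> y \<in> monomials n d \<Longrightarrow> revlex_less y x \<Longrightarrow> y \<in> revlex_seg n d s"
  using revlex.down_closed_initial_seg unfolding revlex.down_closed_def by blast

lemma card_revlex_seg_le:
  "s \<le> card (monomials n d) \<Longrightarrow> card (revlex_seg n d s) = s"
  by (simp add: revlex.card_initial_seg)

lemma revlex_seg_0: "revlex_seg n d 0 = {}"
  unfolding revlex.initial_seg_def by simp

fun del_nth :: "nat \<Rightarrow> nat list \<Rightarrow> nat list" where
  "del_nth _ [] = []"
| "del_nth 0 (x # xs) = xs"
| "del_nth (Suc k) (x # xs) = x # del_nth k xs"

fun ins_nth :: "nat \<Rightarrow> nat \<Rightarrow> nat list \<Rightarrow> nat list" where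
  "ins_nth 0 c xs = c # xs"
| "ins_nth (Suc k) c [] = [c]"
| "ins_nth (Suc k) c (x # xs) = x # ins_nth k c xs"

lemma length_del_nth: "k < length xs \<Longrightarrow> length (del_nth k xs) = length xs - 1"
  by (induction k xs rule: del_nth.induct) auto

lemma nth_ins_nth: "k \<le> length xs \<Longrightarrow> ins_nth k c xs ! k = c"
  by (induction k c xs rule: ins_nth.induct) auto

lemma del_nth_ins_nth: "k \<le> length xs \<Longrightarrow> del_nth k (ins_nth k c xs) = xs"
  by (induction k c xs rule: ins_nth.induct) auto

lemma ins_nth_del_nth: "k < length xs \<Longrightarrow> ins_nth k (xs ! k) (del_nth k xs) = xs"
  by (induction k xs rule: del_nth.induct) auto

lemma revlex_less_ins_nth_iff:
  "length xs = length ys \<Longrightarrow> k \<le> length xs \<Longrightarrow>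
    revlex_less (ins_nth k c xs) (ins_nth k c ys) \<longleftrightarrow> revlex_less xs ys"
proof (induction k arbitrary: xs ys)
  case (Suc k)
  then obtain x xs' y ys' where "xs = x # xs'" "ys = y # ys'"
    by (cases xs; cases ys) auto
  moreover have "ins_nth k c xs' = ins_nth k c ys' \<Longrightarrow> xs' = ys'"
    using Suc.prems \<open>xs = x # xs'\<close> \<open>ys = y # ys'\<close>
      by (metis del_nth_ins_nth Suc_le_length_iff list.inject)
  ultimately show ?case using Suc by auto
qed (auto simp: revlex_less_irrefl)

lemma revlex_less_del_nth_iff:
  "length xs = length ys \<Longrightarrow> k < length xs \<Longrightarrow> xs ! k = ys ! k \<Longrightarrow>
    revlex_less (del_nth k xs) (del_nth k ys) \<longleftrightarrow> revlex_less xs ys"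
  using revlex_less_ins_nth_iff[of "del_nth k xs" "del_nth k ys" k "xs ! k"]
    ins_nth_del_nth[of k xs] ins_nth_del_nth[of k ys]
  by (simp add: length_del_nth)

lemma ins_nth_monomials:
  "x \<in> monomials n d \<Longrightarrow> k \<le> n \<Longrightarrow> ins_nth k c x \<in> monomials (Suc n) (d + c)"
proof -
  have "length (ins_nth k c xs) = Suc (length xs)" if "k \<le> length xs" for xs
    using that by (induction k c xs rule: ins_nth.induct) auto
  moreover have "sum_list (ins_nth k c xs) = c + sum_list xs" for xs
    by (induction k c xs rule: ins_nth.induct) auto
  ultimately show "x \<in> monomials n d \<Longrightarrow> k \<le> n \<Longrightarrow> ?thesis"
    unfolding monomials_def by simp
qed

lemma sum_list_del_nth: "k < length xs \<Longrightarrow> sum_list (del_nth k xs) + xs ! k = sum_list xs"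
  by (induction k xs rule: del_nth.induct) auto

lemma del_nth_monomials:
  "x \<in> monomials (Suc n) d \<Longrightarrow> k \<le> n \<Longrightarrow> del_nth k x \<in> monomials n (d - x ! k)"
  unfolding monomials_def using sum_list_del_nth[of k x] length_del_nth[of k x] by auto

definition shadow :: "nat list set \<Rightarrow> nat list set" where
  "shadow F = {xs[i := Suc (xs ! i)] | xs i. xs \<in> F \<and> i < length xs}"

lemma sum_list_incr:
  "i < length xs \<Longrightarrow> sum_list (xs[i := Suc (xs ! i)]) = Suc (sum_list (xs::nat list))"
proof (induction xs arbitrary: i)
  case (Cons x xs) then show ?case by (cases i) auto
qed simp

lemma shadow_monomials: "F \<subseteq> monomials n d \<Longrightarrow> shadow F \<subseteq> monomials n (Suc d)"
  unfolding shadow_def monomials_def using sum_list_incr by fastforce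

lemma finite_shadow:
  assumes "finite F"
  shows "finite (shadow F)"
proof -
  define N where "N = Max (insert 0 (length ` F))"
  have "shadow F \<subseteq> (\<lambda>(xs, i). xs[i := Suc (xs ! i)]) ` (F \<times> {..<N})"
  proof
    fix m assume "m \<in> shadow F"
    then obtain xs i where m: "m = xs[i := Suc (xs ! i)]" "xs \<in> F" "i < length xs"
      unfolding shadow_def by blast
    have "length xs \<le> N" unfolding N_def using m assms by (intro Max_ge) auto
    then show "m \<in> (\<lambda>(xs, i). xs[i := Suc (xs ! i)]) ` (F \<times> {..<N})"
      using m by (intro image_eqI[of _ _ "(xs, i)"]) auto
  qed
  then show ?thesis using assms by (meson finite_SigmaI finite_imageI finite_lessThan finite_subset)
qed

lemma shadow_empty [simp]: "shadow {} = {}"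
  unfolding shadow_def by blast

lemma revlex_less_incr: "i < length xs \<Longrightarrow> revlex_less (xs[i := Suc (xs ! i)]) xs"
proof (induction xs arbitrary: i)
  case (Cons x xs) then show ?case by (cases i) auto
qed simp

text \<open>Dropping one from the first nonzero entry gives the revlex-largest divisor of degree one
  less; its monotonicity is why shadows of revlex segments are revlex segments.\<close>
fun decr_first :: "nat list \<Rightarrow> nat list" where
  "decr_first [] = []"
| "decr_first (0 # xs) = 0 # decr_first xs"
| "decr_first (Suc x # xs) = x # xs"

lemma length_decr_first [simp]: "length (decr_first xs) = length xs"
  by (induction xs rule: decr_first.induct) auto

lemma sum_list_decr_first: "sum_list (decr_first xs) = sum_list xs - 1"
  by (induction xs rule: decr_first.induct) auto

lemma incr_decr_first:
  "0 < sum_list xs \<Longrightarrow> \<exists>i<length xs. xs = (decr_first xs)[i := Suc (decr_first xs ! i)]"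
proof (induction xs rule: decr_first.induct)
  case (2 xs)
  then obtain i where "i < length xs" "xs = (decr_first xs)[i := Suc (decr_first xs ! i)]" by auto
  then show ?case by (intro exI[of _ "Suc i"]) auto
next
  case (3 x xs) then show ?case by (intro exI[of _ 0]) auto
qed simp

lemma revlex_less_decr_first: "0 < sum_list xs \<Longrightarrow> revlex_less xs (decr_first xs)"
  using incr_decr_first[of xs] revlex_less_incr by (metis length_decr_first)

lemma decr_first_incr_le:
  "i < length xs \<Longrightarrow>
    decr_first (xs[i := Suc (xs ! i)]) = xs \<or> revlex_less (decr_first (xs[i := Suc (xs ! i)])) xs"
proof (induction xs arbitrary: i)
  case (Cons x xs)
  show ?case
  proof (cases i)
    case (Suc i')
    then have i': "i' < length xs" using Cons by simp
    show ?thesis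
      using Cons.IH[OF i'] revlex_less_incr[OF i'] Suc by (cases x) auto
  qed simp
qed simp

lemma decr_first_revlex_less_aux:
  "revlex_less u v \<Longrightarrow> sum_list v < sum_list u \<Longrightarrow>
    revlex_less (decr_first u) v \<or> decr_first u = v"
proof (induction u arbitrary: v)
  case (Cons a us)
  then obtain c vs where v: "v = c # vs" by (cases v) auto
  have h: "revlex_less us vs \<or> (us = vs \<and> c < a)" using Cons.prems v by simp
  show ?case
  proof (cases a)
    case (Suc a')
    then show ?thesis using h v by (cases "a' = c") auto
  next
    case 0
    then have "revlex_less us vs" "sum_list vs < sum_list us" using h Cons.prems v by auto
    then have "revlex_less (decr_first us) vs \<or> decr_first us = vs" using Cons.IH by blast
    moreover have "decr_first us = vs \<Longrightarrow> c = 0"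
      using Cons.prems v 0 sum_list_decr_first[of us] by simp
    ultimately show ?thesis using 0 v by auto
  qed
qed simp

lemma decr_first_mono:
  "revlex_less m' m \<Longrightarrow> sum_list m' = sum_list m \<Longrightarrow> 0 < sum_list m \<Longrightarrow>
    decr_first m' = decr_first m \<or> revlex_less (decr_first m') (decr_first m)"
proof (induction m' arbitrary: m)
  case (Cons a xs')
  then obtain b xs where m: "m = b # xs" by (cases m) auto
  have h: "revlex_less xs' xs \<or> (xs' = xs \<and> b < a)" using Cons.prems m by simp
  show ?case
  proof (cases a)
    case (Suc a')
    show ?thesis
    proof (cases b)
      case 0
      then have "revlex_less xs (decr_first xs)"
        using Cons.prems m by (intro revlex_less_decr_first) simp
      then have "revlex_less xs' (decr_first xs)" using h revlex_less_trans by blast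
      then show ?thesis using m 0 Suc by auto
    qed (use h m Suc in auto)
  next
    case 0
    then have xs'xs: "revlex_less xs' xs" using h by simp
    show ?thesis
    proof (cases b)
      case 0
      then show ?thesis using Cons.IH[OF xs'xs] Cons.prems m \<open>a = 0\<close> by auto
    next
      case (Suc b')
      have "sum_list xs < sum_list xs'" using Cons.prems m \<open>a = 0\<close> Suc by simp
      then have "revlex_less (decr_first xs') xs \<or> decr_first xs' = xs"
        using decr_first_revlex_less_aux xs'xs by blast
      moreover have "decr_first xs' = xs \<Longrightarrow> b' = 0"
        using Cons.prems m \<open>a = 0\<close> Suc sum_list_decr_first[of xs'] by simp
      ultimately show ?thesis using m Suc \<open>a = 0\<close> by auto
    qed
  qed
qed simp

lemma revlex_closed_shadow_seg: "revlex_closed n (Suc d) (shadow (revlex_seg n d s))"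
  unfolding revlex.down_closed_def
proof (intro conjI allI impI)
  show "shadow (revlex_seg n d s) \<subseteq> monomials n (Suc d)"
    using shadow_monomials revlex.initial_seg_subset by blast
next
  fix m' m
  assume m: "m \<in> shadow (revlex_seg n d s)" and m': "m' \<in> monomials n (Suc d)"
    and less: "revlex_less m' m"
  obtain l i where l: "m = l[i := Suc (l ! i)]" "l \<in> revlex_seg n d s" "i < length l"
    using m unfolding shadow_def by blast
  have "m \<in> monomials n (Suc d)"
    using m shadow_monomials revlex.initial_seg_subset by blast
  then have sums: "sum_list m' = sum_list m" "0 < sum_list m"
    using m' unfolding monomials_def by auto
  have "decr_first m = l \<or> revlex_less (decr_first m) l"
    using decr_first_incr_le[OF l(3)] l(1) by simp
  then have "decr_first m' = l \<or> revlex_less (decr_first m') l"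
    using decr_first_mono[OF less sums] revlex_less_trans by metis
  moreover have "decr_first m' \<in> monomials n d"
    using m' unfolding monomials_def by (simp add: sum_list_decr_first)
  ultimately have "decr_first m' \<in> revlex_seg n d s"
    using l(2) revlex_seg_downward by blast
  moreover obtain j where "j < length m'" "m' = (decr_first m')[j := Suc (decr_first m' ! j)]"
    using incr_decr_first[of m'] sums by auto
  ultimately show "m' \<in> shadow (revlex_seg n d s)"
    unfolding shadow_def by (metis (mono_tags, lifting) length_decr_first mem_Collect_eq)
qed

definition slice :: "nat \<Rightarrow> nat \<Rightarrow> nat list set \<Rightarrow> nat list set" where
  "slice k c F = del_nth k ` {x\<in>F. x ! k = c}"

lemma del_nth_update_less:
  "i < k \<Longrightarrow> k < length xs \<Longrightarrow> del_nth k (xs[i := v]) = (del_nth k xs)[i := v]"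
proof (induction k xs arbitrary: i rule: del_nth.induct)
  case (3 k x xs) then show ?case by (cases i) auto
qed auto

lemma del_nth_update_greater:
  "k < i \<Longrightarrow> i < length xs \<Longrightarrow> del_nth k (xs[i := v]) = (del_nth k xs)[i - 1 := v]"
proof (induction k xs arbitrary: i rule: del_nth.induct)
  case (2 x xs) then show ?case by (cases i) auto
next
  case (3 k x xs)
  then obtain i' where "i = Suc i'" by (cases i) auto
  then show ?case using 3 by (cases i') auto
qed auto

lemma del_nth_update_same: "del_nth k (xs[k := v]) = del_nth k xs"
  by (induction k xs rule: del_nth.induct) auto

lemma nth_del_nth_less: "i < k \<Longrightarrow> k < length xs \<Longrightarrow> del_nth k xs ! i = xs ! i"
proof (induction k xs arbitrary: i rule: del_nth.induct)
  case (3 k x xs) then show ?case by (cases i) auto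
qed auto

lemma nth_del_nth_greater: "k < i \<Longrightarrow> i < length xs \<Longrightarrow> del_nth k xs ! (i - 1) = xs ! i"
proof (induction k xs arbitrary: i rule: del_nth.induct)
  case (2 x xs) then show ?case by (cases i) auto
next
  case (3 k x xs)
  then obtain i' where "i = Suc i'" by (cases i) auto
  then show ?case using 3 3(1)[of i'] by (cases i') auto
qed auto

lemma del_nth_mem_slice: "x \<in> F \<Longrightarrow> del_nth k x \<in> slice k (x ! k) F"
  unfolding slice_def by blast

context
  fixes F :: "nat list set" and n d k :: nat
  assumes F: "F \<subseteq> monomials (Suc n) d" and k: "k \<le> n"
begin

lemma length_of_mem: "x \<in> F \<Longrightarrow> length x = Suc n"
  using F unfolding monomials_def by auto

lemma slice_monomials: "slice k c F \<subseteq> monomials n (d - c)"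
  unfolding slice_def using F k del_nth_monomials by fastforce

lemma ins_nth_mem_of_slice: "y \<in> slice k c F \<Longrightarrow> ins_nth k c y \<in> F"
  unfolding slice_def using ins_nth_del_nth length_of_mem k by fastforce

lemma card_slice: "card (slice k c F) = card {x\<in>F. x ! k = c}"
proof -
  have "inj_on (del_nth k) {x\<in>F. x ! k = c}"
    by (rule inj_onI)
      (metis (mono_tags, lifting) ins_nth_del_nth length_of_mem k le_imp_less_Suc mem_Collect_eq)
  then show ?thesis unfolding slice_def by (rule card_image)
qed

lemma slice_eq_empty: "d < c \<Longrightarrow> slice k c F = {}"
proof -
  assume "d < c"
  then have "x ! k \<noteq> c" if "x \<in> F" for x
    using nth_le_degree[of x "Suc n" d k] F k that by auto
  then have empty: "{x\<in>F. x ! k = c} = {}" by blast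
  show ?thesis unfolding slice_def empty by simp
qed

lemma card_le_card_slice_monomials: "card (slice k c F) \<le> card (monomials n (d - c))"
  using slice_monomials finite_monomials by (rule card_mono[rotated])

lemma sum_over_fibers: "sum f F = (\<Sum>c\<le>d. sum f {x\<in>F. x ! k = c})"
proof -
  have fin: "finite F" using F finite_monomials finite_subset by blast
  have "F = (\<Union>c\<le>d. {x\<in>F. x ! k = c})"
    using nth_le_degree[of _ "Suc n" d k] F k by auto
  then have "sum f F = sum f (\<Union>c\<le>d. {x\<in>F. x ! k = c})"
    by (rule arg_cong)
  also have "\<dots> = (\<Sum>c\<le>d. sum f {x\<in>F. x ! k = c})"
    by (rule sum.UNION_disjoint) (use fin in auto)
  finally show ?thesis .
qed

lemma card_eq_sum_card_slice: "d \<le> N \<Longrightarrow> card F = (\<Sum>c\<le>N. card (slice k c F))"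
proof -
  assume "d \<le> N"
  have "card F = (\<Sum>c\<le>d. card {x\<in>F. x ! k = c})"
    using sum_over_fibers[of "\<lambda>_. 1"] by (simp only: card_eq_sum)
  also have "\<dots> = (\<Sum>c\<le>N. card {x\<in>F. x ! k = c})"
  proof (rule sum.mono_neutral_left)
    have "{x\<in>F. x ! k = c} = {}" if "d < c" for c
      using nth_le_degree[of _ "Suc n" d k] F k that by force
    then show "\<forall>c\<in>{..N} - {..d}. card {x\<in>F. x ! k = c} = 0"
      by (metis DiffD2 atMost_iff card.empty not_le)
  qed (use \<open>d \<le> N\<close> in auto)
  finally show ?thesis using card_slice by simp
qed

lemma slice_shadow_subset:
  "slice k c (shadow F) \<subseteq> shadow (slice k c F) \<union> (if c = 0 then {} else slice k (c - 1) F)"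
proof
  fix y assume "y \<in> slice k c (shadow F)"
  then obtain x i where x: "x \<in> F" "i < length x" "x[i := Suc (x ! i)] ! k = c"
      "y = del_nth k (x[i := Suc (x ! i)])"
    unfolding slice_def shadow_def by blast
  have kx: "k < length x" using length_of_mem[OF x(1)] k by simp
  consider "i = k" | "i < k" | "k < i" by linarith
  then show "y \<in> shadow (slice k c F) \<union> (if c = 0 then {} else slice k (c - 1) F)"
  proof cases
    case 1
    then have "c = Suc (x ! k)" "y = del_nth k x"
      using x kx del_nth_update_same by auto
    then show ?thesis using x(1) unfolding slice_def by auto
  next
    case 2
    have "y = (del_nth k x)[i := Suc (del_nth k x ! i)]"
      using x 2 kx del_nth_update_less nth_del_nth_less by simp
    moreover have "i < length (del_nth k x)" using 2 kx length_del_nth[of k x] by simp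
    moreover have "del_nth k x \<in> slice k c F" using x 2 unfolding slice_def by auto
    ultimately show ?thesis unfolding shadow_def by blast
  next
    case 3
    have "y = (del_nth k x)[i - 1 := Suc (del_nth k x ! (i - 1))]"
      using x 3 del_nth_update_greater nth_del_nth_greater by simp
    moreover have "i - 1 < length (del_nth k x)" using 3 x(2) length_del_nth[of k x] kx by simp
    moreover have "del_nth k x \<in> slice k c F" using x 3 unfolding slice_def by auto
    ultimately show ?thesis unfolding shadow_def by blast
  qed
qed

lemma shadow_slice_subset:
  "shadow (slice k c F) \<union> (if c = 0 then {} else slice k (c - 1) F) \<subseteq> slice k c (shadow F)"
proof
  fix y assume y: "y \<in> shadow (slice k c F) \<union> (if c = 0 then {} else slice k (c - 1) F)"
  show "y \<in> slice k c (shadow F)"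
  proof (cases "y \<in> shadow (slice k c F)")
    case True
    then obtain x j where x: "x \<in> F" "x ! k = c" "j < length (del_nth k x)"
        "y = (del_nth k x)[j := Suc (del_nth k x ! j)]"
      unfolding shadow_def slice_def by blast
    have lx: "length x = Suc n" using length_of_mem[OF x(1)] .
    have kx: "k < length x" using lx k by simp
    have j: "j < n" using x(3) lx length_del_nth[OF kx] by simp
    define i where "i = (if j < k then j else Suc j)"
    have "i < length x" unfolding i_def using j lx by simp
    then have "x[i := Suc (x ! i)] \<in> shadow F" unfolding shadow_def using x(1) by blast
    moreover have "x[i := Suc (x ! i)] ! k = c" unfolding i_def using x by simp
    moreover have "del_nth k (x[i := Suc (x ! i)]) = y"
      unfolding i_def using x kx lx j del_nth_update_less nth_del_nth_less
        del_nth_update_greater[of k "Suc j" x] nth_del_nth_greater[of k "Suc j" x] by auto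
    ultimately show ?thesis unfolding slice_def by blast
  next
    case False
    then have c: "c \<noteq> 0" "y \<in> slice k (c - 1) F" using y by (auto split: if_splits)
    then obtain x where x: "x \<in> F" "x ! k = c - 1" "y = del_nth k x" unfolding slice_def by blast
    have kx: "k < length x" using length_of_mem[OF x(1)] k by simp
    have "x[k := Suc (x ! k)] \<in> shadow F" unfolding shadow_def using x(1) kx by blast
    moreover have "x[k := Suc (x ! k)] ! k = c" using x kx c by simp
    moreover have "del_nth k (x[k := Suc (x ! k)]) = y" using x del_nth_update_same by simp
    ultimately show ?thesis unfolding slice_def by blast
  qed
qed

lemma slice_shadow:
  "slice k c (shadow F) = shadow (slice k c F) \<union> (if c = 0 then {} else slice k (c - 1) F)"
  using slice_shadow_subset shadow_slice_subset by (rule subset_antisym)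

end

lemma card_shadow_eq_sum:
  assumes F: "F \<subseteq> monomials (Suc n) d" and k: "k \<le> n"
  shows "card (shadow F) =
    (\<Sum>c\<le>Suc d. card (shadow (slice k c F) \<union> (if c = 0 then {} else slice k (c - 1) F)))"
  using card_eq_sum_card_slice[OF shadow_monomials[OF F] k order_refl] slice_shadow[OF F k]
  by simp

definition compress :: "nat \<Rightarrow> nat \<Rightarrow> nat \<Rightarrow> nat list set \<Rightarrow> nat list set" where
  "compress n d k F = (\<Union>c\<le>d. ins_nth k c ` revlex_seg n (d - c) (card (slice k c F)))"

lemma length_of_revlex_seg: "x \<in> revlex_seg n d s \<Longrightarrow> length x = n"
  using revlex.initial_seg_subset unfolding monomials_def by blast

lemma compress_monomials:
  assumes k: "k \<le> n"
  shows "compress n d k F \<subseteq> monomials (Suc n) d"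
proof
  fix y assume "y \<in> compress n d k F"
  then obtain c l where c: "c \<le> d" "l \<in> revlex_seg n (d - c) (card (slice k c F))"
      "y = ins_nth k c l"
    unfolding compress_def by blast
  then have "ins_nth k c l \<in> monomials (Suc n) (d - c + c)"
    using ins_nth_monomials k revlex.initial_seg_subset by blast
  then show "y \<in> monomials (Suc n) d" using c by simp
qed

lemma fiber_compress:
  assumes k: "k \<le> n" and c: "c \<le> d"
  shows "{x\<in>compress n d k F. x ! k = c} = ins_nth k c ` revlex_seg n (d - c) (card (slice k c F))"
proof (intro set_eqI iffI)
  fix x assume "x \<in> {x\<in>compress n d k F. x ! k = c}"
  then obtain c' l where c': "l \<in> revlex_seg n (d - c') (card (slice k c' F))"
      "x = ins_nth k c' l" "x ! k = c"
    unfolding compress_def by blast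
  then have "c' = c" using nth_ins_nth[of k l c'] length_of_revlex_seg k by simp
  then show "x \<in> ins_nth k c ` revlex_seg n (d - c) (card (slice k c F))" using c' by auto
next
  fix x assume "x \<in> ins_nth k c ` revlex_seg n (d - c) (card (slice k c F))"
  then obtain l where l: "l \<in> revlex_seg n (d - c) (card (slice k c F))" "x = ins_nth k c l"
    by auto
  then have "x ! k = c" using nth_ins_nth[of k l c] length_of_revlex_seg k by simp
  moreover have "x \<in> compress n d k F" unfolding compress_def using c l by blast
  ultimately show "x \<in> {x\<in>compress n d k F. x ! k = c}" by blast
qed

lemma slice_compress:
  assumes k: "k \<le> n"
  shows "slice k c (compress n d k F) =
    (if c \<le> d then revlex_seg n (d - c) (card (slice k c F)) else {})"
proof (cases "c \<le> d")
  case True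
  have "del_nth k ` ins_nth k c ` revlex_seg n (d - c) s = revlex_seg n (d - c) s" for s
    unfolding image_comp using del_nth_ins_nth length_of_revlex_seg k by (simp cong: image_cong)
  then show ?thesis unfolding slice_def fiber_compress[OF k True] using True by simp
next
  case False
  have "x ! k \<noteq> c" if "x \<in> compress n d k F" for x
    using nth_le_degree[of x "Suc n" d k] compress_monomials[OF k] k that False by auto
  then have "{x\<in>compress n d k F. x ! k = c} = {}" by blast
  then show ?thesis unfolding slice_def using False by simp
qed

context
  fixes F :: "nat list set" and n d k :: nat
  assumes F: "F \<subseteq> monomials (Suc n) d" and k: "k \<le> n"
begin

lemma card_slice_compress:
  "c \<le> d \<Longrightarrow> card (slice k c (compress n d k F)) = card (slice k c F)"
  using slice_compress[OF k] card_revlex_seg_le card_le_card_slice_monomials[OF F k] by simp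

lemma card_compress: "card (compress n d k F) = card F"
proof -
  have "card (compress n d k F) = (\<Sum>c\<le>d. card (slice k c (compress n d k F)))"
    using card_eq_sum_card_slice[OF compress_monomials[OF k] k order_refl] .
  also have "\<dots> = (\<Sum>c\<le>d. card (slice k c F))"
    using card_slice_compress by simp
  also have "\<dots> = card F"
    using card_eq_sum_card_slice[OF F k order_refl] by simp
  finally show ?thesis .
qed

end

definition macaulay_holds :: "nat \<Rightarrow> bool" where
  "macaulay_holds n \<longleftrightarrow>
    (\<forall>d G. G \<subseteq> monomials n d \<longrightarrow> card (shadow (revlex_seg n d (card G))) \<le> card (shadow G))"

lemma max_card_le_card_Un: "finite A \<Longrightarrow> finite B \<Longrightarrow> max (card A) (card B) \<le> card (A \<union> B)"
  by (simp add: card_mono)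

context
  fixes F :: "nat list set" and n d k :: nat
  assumes F: "F \<subseteq> monomials (Suc n) d" and k: "k \<le> n" and macaulay: "macaulay_holds n"
begin

lemma card_shadow_slice_compress_le:
  assumes c: "c \<le> Suc d"
  defines "G \<equiv> compress n d k F"
  shows "card (shadow (slice k c G) \<union> (if c = 0 then {} else slice k (c - 1) G))
    \<le> card (shadow (slice k c F) \<union> (if c = 0 then {} else slice k (c - 1) F))"
proof -
  let ?a = "\<lambda>c. card (slice k c F)"
  have slice_G: "slice k c G = (if c \<le> d then revlex_seg n (d - c) (?a c) else {})" for c
    unfolding G_def by (rule slice_compress[OF k])
  have fin: "finite (slice k c F)" for c
    using slice_monomials[OF F k] finite_monomials finite_subset by blast
  have card_seg: "card (revlex_seg n (d - c) (?a c)) = ?a c" for c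
    using card_revlex_seg_le card_le_card_slice_monomials[OF F k] by simp
  have shadow_le: "card (shadow (revlex_seg n (d - c) (?a c))) \<le> card (shadow (slice k c F))"
    using macaulay slice_monomials[OF F k] unfolding macaulay_holds_def by simp
  have max_le: "max (card (shadow (slice k c F))) (?a (c - 1))
      \<le> card (shadow (slice k c F) \<union> slice k (c - 1) F)"
    by (intro max_card_le_card_Un finite_shadow fin)
  consider "c = 0" | "c = Suc d" | "0 < c" "c \<le> d" using c by linarith
  then show ?thesis
  proof cases
    case 1
    then show ?thesis using slice_G shadow_le by simp
  next
    case 2
    then have "shadow (slice k c G) \<union> slice k (c - 1) G = revlex_seg n (d - d) (?a d)"
      using slice_G by simp
    then show ?thesis using card_seg[of d] max_le 2 by simp
  next
    case 3
    txt \<open>Both parts are revlex segments of the same degree, so their union is the larger one.\<close>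
    have "d - (c - 1) = Suc (d - c)" using 3 by simp
    then have "card (shadow (slice k c G) \<union> slice k (c - 1) G)
        = card (shadow (revlex_seg n (d - c) (?a c)) \<union> revlex_seg n (Suc (d - c)) (?a (c - 1)))"
      using slice_G 3 by simp
    also have "\<dots> = max (card (shadow (revlex_seg n (d - c) (?a c)))) (?a (c - 1))"
      using revlex.card_Un_down_closed[OF revlex_closed_shadow_seg revlex.down_closed_initial_seg]
        card_seg[of "c - 1", unfolded \<open>d - (c - 1) = Suc (d - c)\<close>] by simp
    also have "\<dots> \<le> card (shadow (slice k c F) \<union> slice k (c - 1) F)"
      using shadow_le max_le by linarith
    finally show ?thesis using 3 by simp
  qed
qed

lemma card_shadow_compress_le: "card (shadow (compress n d k F)) \<le> card (shadow F)"
proof -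
  have "card (shadow (compress n d k F)) = (\<Sum>c\<le>Suc d. card (shadow (slice k c (compress n d k F))
      \<union> (if c = 0 then {} else slice k (c - 1) (compress n d k F))))"
    by (rule card_shadow_eq_sum[OF compress_monomials[OF k] k])
  also have "\<dots> \<le> (\<Sum>c\<le>Suc d.
      card (shadow (slice k c F) \<union> (if c = 0 then {} else slice k (c - 1) F)))"
    by (rule sum_mono) (use card_shadow_slice_compress_le in auto)
  also have "\<dots> = card (shadow F)"
    using card_shadow_eq_sum[OF F k] by simp
  finally show ?thesis .
qed

end

definition rank_sum :: "nat \<Rightarrow> nat \<Rightarrow> nat list set \<Rightarrow> nat" where
  "rank_sum n d F = (\<Sum>x\<in>F. revlex_rank n d x)"

lemma fiber_compress_downward:
  assumes k: "k \<le> n" and c: "c \<le> d"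
    and y: "y \<in> compress n d k F" "y ! k = c"
    and x: "x \<in> monomials (Suc n) d" "x ! k = c" and less: "revlex_less x y"
  shows "x \<in> compress n d k F"
proof -
  obtain l where l: "l \<in> revlex_seg n (d - c) (card (slice k c F))" "y = ins_nth k c l"
    using y fiber_compress[OF k c] by blast
  have y_mon: "y \<in> monomials (Suc n) d" using y compress_monomials[OF k] by blast
  have len: "length x = Suc n" "length y = Suc n" using x y_mon unfolding monomials_def by auto
  have "del_nth k y = l" using l del_nth_ins_nth length_of_revlex_seg k by simp
  moreover have "revlex_less (del_nth k x) (del_nth k y)"
    using revlex_less_del_nth_iff[of x y k] len x y less k by simp
  moreover have "del_nth k x \<in> monomials n (d - c)" using del_nth_monomials[OF x(1) k] x by simp
  ultimately have "del_nth k x \<in> revlex_seg n (d - c) (card (slice k c F))"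
    using l revlex_seg_downward by blast
  moreover have "x = ins_nth k c (del_nth k x)" using ins_nth_del_nth[of k x] len k x by simp
  ultimately show ?thesis using fiber_compress[OF k c] by blast
qed

context
  fixes F :: "nat list set" and n d k :: nat
  assumes F: "F \<subseteq> monomials (Suc n) d" and k: "k \<le> n"
begin

lemma sum_rank_fiber_compress_le:
  assumes c: "c \<le> d"
  defines "A \<equiv> {x\<in>F. x ! k = c}" and "B \<equiv> {x\<in>compress n d k F. x ! k = c}"
  shows "sum (revlex_rank (Suc n) d) B \<le> sum (revlex_rank (Suc n) d) A"
    and "A \<noteq> B \<Longrightarrow> sum (revlex_rank (Suc n) d) B < sum (revlex_rank (Suc n) d) A"
proof -
  let ?Y = "{x \<in> monomials (Suc n) d. x ! k = c}"
  have "card A = card (slice k c F)"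
    unfolding A_def using card_slice[OF F k] by simp
  also have "\<dots> = card B"
    unfolding B_def using card_slice[OF compress_monomials[OF k] k] card_slice_compress[OF F k c]
      by simp
  finally have card_eq: "card A = card B" .
  have B_sub: "B \<subseteq> ?Y" unfolding B_def using compress_monomials[OF k] by blast
  have B_down: "\<forall>x y. y \<in> B \<longrightarrow> x \<in> ?Y \<longrightarrow> revlex_less x y \<longrightarrow> x \<in> B"
    unfolding B_def using fiber_compress_downward[OF k c] by blast
  have A_sub: "A \<subseteq> ?Y" unfolding A_def using F by blast
  have Y_sub: "?Y \<subseteq> monomials (Suc n) d" by blast
  have mono: "revlex_rank (Suc n) d x < revlex_rank (Suc n) d y"
    if "x \<in> monomials (Suc n) d" "revlex_less x y" for x y
    using revlex.rank_less_rank that by blast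
  note le = revlex.sum_down_closed_le[OF B_sub B_down A_sub Y_sub card_eq mono]
  show "sum (revlex_rank (Suc n) d) B \<le> sum (revlex_rank (Suc n) d) A" by (rule le(1))
  show "A \<noteq> B \<Longrightarrow> sum (revlex_rank (Suc n) d) B < sum (revlex_rank (Suc n) d) A" by (rule le(2))
qed

lemma rank_sum_compress_less:
  assumes ne: "compress n d k F \<noteq> F"
  shows "rank_sum (Suc n) d (compress n d k F) < rank_sum (Suc n) d F"
proof -
  have "\<exists>c\<le>d. {x\<in>F. x ! k = c} \<noteq> {x\<in>compress n d k F. x ! k = c}"
  proof (rule ccontr)
    assume "\<not> ?thesis"
    then have same: "{x\<in>F. x ! k = c} = {x\<in>compress n d k F. x ! k = c}" if "c \<le> d" for c
      using that by blast
    have "F = (\<Union>c\<le>d. {x\<in>F. x ! k = c})"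
      using nth_le_degree[of _ "Suc n" d k] F k by auto
    also have "\<dots> = (\<Union>c\<le>d. {x\<in>compress n d k F. x ! k = c})"
      using same by simp
    also have "\<dots> = compress n d k F"
      using compress_monomials[OF k] nth_le_degree[of _ "Suc n" d k] k by fastforce
    finally show False using ne by simp
  qed
  then obtain c where c: "c \<le> d" "{x\<in>F. x ! k = c} \<noteq> {x\<in>compress n d k F. x ! k = c}"
    by blast
  show ?thesis
    unfolding rank_sum_def sum_over_fibers[OF F k] sum_over_fibers[OF compress_monomials[OF k] k]
    by (rule sum_strict_mono_ex1) (use sum_rank_fiber_compress_le c in auto)
qed

end


lemma revlex_le_replicate_zero:
  "u = replicate (length u) 0 \<or> revlex_less u (replicate (length u) 0)"
proof (induction u)
  case (Cons a us) then show ?case by (cases a) auto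
qed simp

lemma revlex_le_head_only:
  assumes "length u = Suc r" "sum_list u = a"
  shows "u = a # replicate r 0 \<or> revlex_less u (a # replicate r 0)"
proof -
  obtain u0 us where u: "u = u0 # us" "length us = r" using assms(1) by (cases u) auto
  show ?thesis
  proof (cases "us = replicate r 0")
    case True then show ?thesis using u assms(2) by (simp add: sum_list_replicate)
  next
    case False
    then show ?thesis using revlex_le_replicate_zero[of us] u by auto
  qed
qed

lemma not_revlex_less_last_only:
  assumes len: "length u = Suc r" and sum: "sum_list u = Suc a"
  shows "\<not> revlex_less u (replicate r 0 @ [Suc a])"
proof
  assume less: "revlex_less u (replicate r 0 @ [Suc a])"
  obtain u1 ul where u: "u = u1 @ [ul]" using len by (metis length_Suc_conv_rev)
  have len1: "length u1 = length (replicate r 0 :: nat list)" using u len by simp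
  have "revlex_less [ul] [Suc a] \<or> ([ul] = [Suc a] \<and> revlex_less u1 (replicate r 0))"
    using less revlex_less_append[OF len1, of "[ul]" "[Suc a]"] u by simp
  moreover have "ul \<le> Suc a" using sum u by simp
  ultimately have "ul = Suc a" "revlex_less u1 (replicate r 0)" by auto
  moreover have "u1 = replicate r 0"
    using sum u len1 \<open>ul = Suc a\<close> by (simp add: sum_list_eq_0_iff replicate_eqI)
  ultimately show False using revlex_less_irrefl by simp
qed

lemma revlex_le_predecessor:
  assumes len: "length y = length (replicate r 0 @ Suc a # b # rest)"
    and sum: "sum_list y = sum_list (replicate r 0 @ Suc a # b # rest)"
    and less: "revlex_less y (replicate r 0 @ Suc a # b # rest)"
  defines "p \<equiv> (a # replicate r 0) @ Suc b # rest"
  shows "y = p \<or> revlex_less y p"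
proof -
  define yu where "yu = take (Suc r) y"
  define yv where "yv = drop (Suc r) y"
  have y: "y = yu @ yv" unfolding yu_def yv_def by simp
  have len_yu: "length yu = Suc r" unfolding yu_def using len by simp
  have "length yv = Suc (length rest)" unfolding yv_def using len by simp
  then obtain c rest2 where yv: "yv = c # rest2" by (cases yv) auto
  have sums: "sum_list yu + sum_list yv = Suc a + b + sum_list rest"
    using sum y by simp
  have "revlex_less yv (b # rest) \<or> (yv = b # rest \<and> revlex_less yu (replicate r 0 @ [Suc a]))"
    using less revlex_less_append[of yu "replicate r 0 @ [Suc a]" yv "b # rest"] len_yu y by simp
  moreover have "\<not> revlex_less yu (replicate r 0 @ [Suc a])" if "yv = b # rest"
    using not_revlex_less_last_only[OF len_yu] sums that by simp
  ultimately have "revlex_less yv (b # rest)" by blast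
  then have "revlex_less rest2 rest \<or> (rest2 = rest \<and> b < c)"
    using yv by simp
  then consider "revlex_less rest2 rest" | "rest2 = rest" "Suc b < c" | "rest2 = rest" "c = Suc b"
    by linarith
  then have "revlex_less yv (Suc b # rest)
      \<or> (yv = Suc b # rest \<and> (yu = a # replicate r 0 \<or> revlex_less yu (a # replicate r 0)))"
  proof cases
    case 3
    then have "sum_list yu = a" using sums yv by simp
    then show ?thesis using revlex_le_head_only[OF len_yu] 3 yv by simp
  qed (use yv in simp_all)
  moreover have "revlex_less y p \<longleftrightarrow> revlex_less yv (Suc b # rest)
      \<or> (yv = Suc b # rest \<and> revlex_less yu (a # replicate r 0))"
    unfolding p_def y by (rule revlex_less_append) (simp add: len_yu)
  ultimately show ?thesis unfolding p_def y by auto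
qed

lemma first_nonzero_decomp:
  fixes x :: "nat list"
  assumes "\<exists>e\<in>set x. e \<noteq> 0"
  obtains r a v where "x = replicate r 0 @ Suc a # v"
proof -
  obtain zs e v where x: "x = zs @ e # v" "e \<noteq> 0" "\<forall>z\<in>set zs. \<not> z \<noteq> 0"
    using assms by (rule split_list_first_propE)
  then obtain a where "e = Suc a" using not0_implies_Suc by blast
  then show ?thesis
    using that[of "length zs" a v] x replicate_length_same[of zs 0] by simp
qed

lemma predecessor_shares_coord:
  fixes r a b :: nat and rest :: "nat list"
  defines "x \<equiv> replicate r 0 @ Suc a # b # rest" and "p \<equiv> (a # replicate r 0) @ Suc b # rest"
  assumes "4 \<le> length x"
  shows "\<exists>k<length x. p ! k = x ! k"
proof (cases rest)
  case Nil
  then have "2 \<le> r" using assms by simp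
  then have "p ! 1 = x ! 1" unfolding p_def x_def by (auto simp: nth_append)
  then show ?thesis using assms(3) by (intro exI[of _ 1]) auto
next
  case (Cons e rest')
  have "p ! (r + 2) = x ! (r + 2)" unfolding p_def x_def Cons by (auto simp: nth_append)
  moreover have "r + 2 < length x" unfolding x_def Cons by simp
  ultimately show ?thesis by blast
qed

lemma exists_revlex_between_sharing_coord:
  assumes x: "x \<in> monomials N d" and y: "y \<in> monomials N d" and less: "revlex_less y x"
    and N: "4 \<le> N"
  shows "\<exists>p\<in>monomials N d. revlex_less p x \<and> (p = y \<or> revlex_less y p) \<and> (\<exists>k<N. p ! k = x ! k)"
proof -
  have lx: "length x = N" "sum_list x = d" and ly: "length y = N" "sum_list y = d"
    using x y unfolding monomials_def by auto
  have "\<exists>e\<in>set x. e \<noteq> 0"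
  proof (rule ccontr)
    assume "\<not> ?thesis"
    then have "d = 0" by (metis lx(2) sum_list_eq_0_iff)
    have "x = replicate N 0" "y = replicate N 0"
      using replicate_length_same[of x 0] replicate_length_same[of y 0]
        sum_list_eq_0_iff[of x] sum_list_eq_0_iff[of y] lx ly \<open>d = 0\<close> by simp_all
    then show False using less revlex_less_irrefl by simp
  qed
  then obtain r a v where xd: "x = replicate r 0 @ Suc a # v" by (rule first_nonzero_decomp)
  show ?thesis
  proof (cases v)
    case Nil
    then have "\<not> revlex_less y x"
      using not_revlex_less_last_only[of y r a] ly lx xd by (simp add: sum_list_replicate)
    then show ?thesis using less by contradiction
  next
    case (Cons b rest)
    define p where "p = (a # replicate r 0) @ Suc b # rest"
    have "p \<in> monomials N d" using lx xd Cons unfolding p_def monomials_def by simp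
    moreover have "revlex_less p x"
      unfolding p_def xd Cons
      using revlex_less_append[of "a # replicate r 0" "replicate r 0 @ [Suc a]"] by simp
    moreover have "p = y \<or> revlex_less y p"
      using revlex_le_predecessor[of y r a b rest] ly lx less xd Cons unfolding p_def by auto
    moreover have "\<exists>k<N. p ! k = x ! k"
      using predecessor_shares_coord[of r a b rest] N lx xd Cons unfolding p_def by simp
    ultimately show ?thesis by blast
  qed
qed

context
  fixes F :: "nat list set" and n d :: nat
  assumes F: "F \<subseteq> monomials (Suc n) d"
begin

lemma mem_of_compress_fixed:
  assumes k: "k \<le> n" and fixed: "compress n d k F = F"
    and x: "x \<in> F" and p: "p \<in> monomials (Suc n) d" "p ! k = x ! k" and less: "revlex_less p x"
  shows "p \<in> F"
proof -
  let ?c = "x ! k"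
  have "?c \<le> d" using nth_le_degree[of x "Suc n" d k] x F k by auto
  then have slice_seg: "slice k ?c F = revlex_seg n (d - ?c) (card (slice k ?c F))"
    using slice_compress[OF k, of ?c d F] fixed by simp
  have len: "length x = Suc n" "length p = Suc n" using x F p unfolding monomials_def by auto
  have "del_nth k x \<in> slice k ?c F" by (rule del_nth_mem_slice[OF x])
  moreover have "del_nth k p \<in> monomials n (d - ?c)" using del_nth_monomials[OF p(1) k] p(2) by simp
  moreover have "revlex_less (del_nth k p) (del_nth k x)"
    using revlex_less_del_nth_iff[of p x k] len p(2) less k by simp
  ultimately have "del_nth k p \<in> slice k ?c F"
    using revlex_seg_downward[of "del_nth k x" n "d - ?c" "card (slice k ?c F)"] slice_seg by simp
  then have "ins_nth k ?c (del_nth k p) \<in> F" by (rule ins_nth_mem_of_slice[OF F k])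
  then show ?thesis using ins_nth_del_nth[of k p] len k p(2) by simp
qed

lemma revlex_closed_of_compress_fixed:
  assumes n: "3 \<le> n" and fixed: "\<forall>k\<le>n. compress n d k F = F"
  shows "revlex_closed (Suc n) d F"
  unfolding revlex.down_closed_def
proof (intro conjI allI impI)
  show "F \<subseteq> monomials (Suc n) d" by (rule F)
  fix y x
  assume "x \<in> F" "y \<in> monomials (Suc n) d" "revlex_less y x"
  then show "y \<in> F"
  proof (induction "revlex_rank (Suc n) d x" arbitrary: x rule: less_induct)
    case less
    have "x \<in> monomials (Suc n) d" using less.prems(1) F by blast
    then obtain p where p: "p \<in> monomials (Suc n) d" "revlex_less p x" "p = y \<or> revlex_less y p"
        and "\<exists>k<Suc n. p ! k = x ! k"
      using exists_revlex_between_sharing_coord[OF _ less.prems(2,3)] n by auto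
    then obtain k where k: "k \<le> n" "p ! k = x ! k" using less_Suc_eq_le by blast
    have "p \<in> F"
      using mem_of_compress_fixed[OF k(1) _ less.prems(1) p(1) k(2) p(2)] fixed k(1) by simp
    show "y \<in> F"
    proof (cases "p = y")
      case False
      then have "revlex_less y p" using p(3) by simp
      moreover have "revlex_rank (Suc n) d p < revlex_rank (Suc n) d x"
        using revlex.rank_less_rank p(1,2) by blast
      ultimately show ?thesis using less.hyps \<open>p \<in> F\<close> less.prems(2) by blast
    qed (use \<open>p \<in> F\<close> in simp)
  qed
qed

end

text \<open>Compressing in each coordinate does not increase the shadow and strictly lowers the rank
  sum until the set is stable, and with at least four coordinates stable sets are revlex segments.\<close>
lemma macaulay_holds_Suc:
  assumes n: "3 \<le> n" and macaulay: "macaulay_holds n"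
  shows "macaulay_holds (Suc n)"
  unfolding macaulay_holds_def
proof (intro allI impI)
  fix d G
  assume "G \<subseteq> monomials (Suc n) d"
  then show "card (shadow (revlex_seg (Suc n) d (card G))) \<le> card (shadow G)"
  proof (induction "rank_sum (Suc n) d G" arbitrary: G rule: less_induct)
    case less
    show ?case
    proof (cases "\<forall>k\<le>n. compress n d k G = G")
      case True
      then have "G = revlex_seg (Suc n) d (card G)"
        using revlex_closed_of_compress_fixed[OF less.prems n] revlex.down_closed_eq_initial_seg
          by blast
      then show ?thesis by simp
    next
      case False
      then obtain k where k: "k \<le> n" "compress n d k G \<noteq> G" by blast
      have "card (shadow (revlex_seg (Suc n) d (card (compress n d k G))))
          \<le> card (shadow (compress n d k G))"
        using less.hyps[OF rank_sum_compress_less[OF less.prems k]] compress_monomials[OF k(1)]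
          by blast
      also have "\<dots> \<le> card (shadow G)"
        by (rule card_shadow_compress_le[OF less.prems k(1) macaulay])
      finally show ?thesis using card_compress[OF less.prems k(1)] by simp
    qed
  qed
qed


lemma monomials_1: "monomials 1 d = {[d]}"
  unfolding monomials_def by (auto simp: length_Suc_conv)

lemma macaulay_holds_1: "macaulay_holds 1"
  unfolding macaulay_holds_def
proof (intro allI impI)
  fix d G assume "G \<subseteq> monomials 1 d"
  then have "revlex_closed 1 d G"
    unfolding revlex.down_closed_def using monomials_1 revlex_less_irrefl by auto
  then have "G = revlex_seg 1 d (card G)" by (rule revlex.down_closed_eq_initial_seg)
  then show "card (shadow (revlex_seg 1 d (card G))) \<le> card (shadow G)" by simp
qed

lemma length_2E:
  assumes "length x = 2"
  obtains a b where "x = [a, b]"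
  using assms by (auto simp: length_Suc_conv numeral_2_eq_2)

lemma monomials_2: "monomials 2 d = (\<lambda>a. [a, d - a]) ` {..d}"
proof (intro set_eqI iffI)
  fix x assume "x \<in> monomials 2 d"
  then obtain a b where "x = [a, b]" "a + b = d"
    unfolding monomials_def by (auto elim: length_2E)
  then show "x \<in> (\<lambda>a. [a, d - a]) ` {..d}" by force
qed (auto simp: monomials_def)

lemma card_monomials_2: "card (monomials 2 d) = Suc d"
proof -
  have "inj_on (\<lambda>a. [a, d - a]) {..d}" by (rule inj_onI) simp
  then show ?thesis unfolding monomials_2 by (simp add: card_image)
qed

text \<open>Raising the first exponent is injective, and raising the second exponent of the element
  with the smallest first exponent gives a further element of the shadow.\<close>
lemma card_shadow_2_ge:
  assumes G: "G \<subseteq> monomials 2 d" and ne: "G \<noteq> {}"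
  shows "Suc (card G) \<le> card (shadow G)"
proof -
  have finG: "finite G" using G finite_monomials finite_subset by blast
  have len: "length x = 2" if "x \<in> G" for x using that G unfolding monomials_def by auto
  define f where "f = (\<lambda>x::nat list. x[0 := Suc (x ! 0)])"
  have inj: "inj_on f G"
  proof (rule inj_onI)
    fix x y assume x: "x \<in> G" and y: "y \<in> G" and eq: "f x = f y"
    obtain x0 x1 where "x = [x0, x1]" using len[OF x] length_2E by blast
    moreover obtain y0 y1 where "y = [y0, y1]" using len[OF y] length_2E by blast
    ultimately show "x = y" using eq unfolding f_def by simp
  qed
  obtain x where x: "x \<in> G" "\<forall>y\<in>G. x ! 0 \<le> y ! 0"
  proof -
    have "Min ((\<lambda>x. x ! 0) ` G) \<in> (\<lambda>x. x ! 0) ` G" using finG ne by simp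
    then obtain x where "x \<in> G" "x ! 0 = Min ((\<lambda>x. x ! 0) ` G)" by (metis imageE)
    then show ?thesis using that finG by simp
  qed
  obtain x0 x1 where xx: "x = [x0, x1]" using len[OF x(1)] length_2E by blast
  define z where "z = [x0, Suc x1]"
  have "z \<in> shadow G" unfolding shadow_def z_def
    using x(1) xx by (intro CollectI exI[of _ x] exI[of _ 1]) auto
  moreover have "z \<notin> f ` G"
  proof
    assume "z \<in> f ` G"
    then obtain w where w: "w \<in> G" "z = f w" by blast
    obtain w0 w1 where "w = [w0, w1]" using len[OF w(1)] length_2E by blast
    then show False using x(2) w xx unfolding z_def f_def by force
  qed
  moreover have "f ` G \<subseteq> shadow G" unfolding shadow_def f_def using len by fastforce
  ultimately have "card (insert z (f ` G)) \<le> card (shadow G)"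
    using finite_shadow[OF finG] by (intro card_mono) auto
  moreover have "card (insert z (f ` G)) = Suc (card G)"
    using \<open>z \<notin> f ` G\<close> finG inj by (simp add: card_image)
  ultimately show ?thesis by simp
qed

lemma mem_revlex_seg_2:
  assumes x: "x \<in> revlex_seg 2 d q"
  obtains a where "a < q" "a \<le> d" "x = [a, d - a]"
proof -
  have "x \<in> monomials 2 d" using x revlex.initial_seg_subset by blast
  then obtain a where a: "a \<le> d" "x = [a, d - a]" unfolding monomials_2 by blast
  have "(\<lambda>b. [b, d - b]) ` {..<a} \<subseteq> {y\<in>monomials 2 d. revlex_less y x}"
    using a by (auto simp: monomials_2)
  then have "card ((\<lambda>b. [b, d - b]) ` {..<a}) \<le> revlex_rank 2 d x"
    unfolding revlex.rank_def using finite_monomials by (intro card_mono) auto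
  moreover have "inj_on (\<lambda>b. [b, d - b]) {..<a}" by (rule inj_onI) simp
  moreover have "revlex_rank 2 d x < q" using x unfolding revlex.initial_seg_def by simp
  ultimately show ?thesis using that a by (simp add: card_image)
qed

lemma card_shadow_revlex_seg_2_le: "card (shadow (revlex_seg 2 d q)) \<le> Suc q"
proof -
  have "shadow (revlex_seg 2 d q) \<subseteq> (\<lambda>a. [a, Suc d - a]) ` {..q}"
  proof
    fix m assume "m \<in> shadow (revlex_seg 2 d q)"
    then obtain x i where m: "m = x[i := Suc (x ! i)]" "x \<in> revlex_seg 2 d q" "i < length x"
      unfolding shadow_def by blast
    obtain a where a: "a < q" "a \<le> d" "x = [a, d - a]" using mem_revlex_seg_2[OF m(2)] .
    have "i = 0 \<or> i = 1" using m(3) a by auto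
    then show "m \<in> (\<lambda>a. [a, Suc d - a]) ` {..q}"
    proof
      assume "i = 0"
      then have "m = [Suc a, Suc d - Suc a]" using m a by simp
      then show ?thesis using a by (intro image_eqI[of _ _ "Suc a"]) auto
    next
      assume "i = 1"
      then have "m = [a, Suc d - a]" using m a by (simp add: Suc_diff_le)
      then show ?thesis using a by (intro image_eqI[of _ _ a]) auto
    qed
  qed
  then have "card (shadow (revlex_seg 2 d q)) \<le> card ((\<lambda>a. [a, Suc d - a]) ` {..q})"
    by (intro card_mono) auto
  also have "\<dots> \<le> Suc q" using card_image_le[of "{..q}"] by simp
  finally show ?thesis .
qed

lemma macaulay_holds_2: "macaulay_holds 2"
  unfolding macaulay_holds_def
proof (intro allI impI)
  fix d G assume G: "G \<subseteq> monomials 2 d"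
  show "card (shadow (revlex_seg 2 d (card G))) \<le> card (shadow G)"
  proof (cases "G = {}")
    case True
    then show ?thesis by (simp add: revlex_seg_0)
  next
    case False
    then show ?thesis
      using card_shadow_revlex_seg_2_le[of d "card G"] card_shadow_2_ge[OF G] by simp
  qed
qed

text \<open>A lower bound for slice \<open>c\<close> of the shadow of a three-variable set whose slices
  have sizes \<open>p c\<close>: it contains the two-variable shadow of slice \<open>c\<close> and a copy of slice
  \<open>c - 1\<close>.\<close>
definition slice_shadow_bound :: "(nat \<Rightarrow> nat) \<Rightarrow> nat \<Rightarrow> nat" where
  "slice_shadow_bound p c = max (p c + of_bool (0 < p c)) (if c = 0 then 0 else p (c - 1))"

lemma slice_shadow_bound_step:
  fixes S E x p0 A :: nat
  assumes IH: "2 * S + E \<le> E * E" "0 < x \<longrightarrow> x < E" and N: "S + E = x + of_bool (0 < x) + A"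
  shows "\<exists>E'. p0 + of_bool (0 < p0) + max (x + of_bool (0 < x)) p0 + A = p0 + S + E'
    \<and> 2 * (p0 + S) + E' \<le> E' * E' \<and> (0 < p0 \<longrightarrow> p0 < E')"
proof -
  have x_le: "x + of_bool (0 < x) \<le> E" using IH(2) by (cases "x = 0") auto
  consider "p0 = 0" | "0 < p0" "p0 \<le> x + of_bool (0 < x)" | "x + of_bool (0 < x) < p0"
    by linarith
  then show ?thesis
  proof cases
    case 1
    then show ?thesis using N IH by (intro exI[of _ E]) simp
  next
    case 2
    then have "0 < x" by (cases "x = 0") auto
    have "2 * (p0 + S) + (E + 1) \<le> (E + 1) * (E + 1)"
    proof -
      have sq: "(E + 1) * (E + 1) = E * E + 2 * E + 1" by (simp add: algebra_simps)
      have "p0 \<le> E" using 2 x_le by simp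
      then show ?thesis unfolding sq using IH(1) by arith
    qed
    moreover have "p0 + of_bool (0 < p0) + max (x + of_bool (0 < x)) p0 + A = p0 + S + (E + 1)"
      using 2 N by simp
    ultimately show ?thesis using 2 x_le by (intro exI[of _ "E + 1"]) simp
  next
    case 3
    define \<delta> where "\<delta> = p0 - (x + of_bool (0 < x))"
    have \<delta>: "1 \<le> \<delta>" "p0 = x + of_bool (0 < x) + \<delta>" using 3 unfolding \<delta>_def by auto
    have "2 * (p0 + S) + (E + 1 + \<delta>) \<le> (E + 1 + \<delta>) * (E + 1 + \<delta>)"
    proof -
      have sq: "(E + 1 + \<delta>) * (E + 1 + \<delta>) = E * E + 2 * (E * \<delta>) + \<delta> * \<delta> + 2 * E + 2 * \<delta> + 1"
        by (simp add: algebra_simps)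
      have "\<delta> \<le> \<delta> * \<delta>" using \<delta>(1) by simp
      then show ?thesis unfolding sq using \<delta>(2) x_le IH(1) by arith
    qed
    moreover have "p0 + of_bool (0 < p0) + max (x + of_bool (0 < x)) p0 + A = p0 + S + (E + 1 + \<delta>)"
      using 3 \<delta> N by simp
    ultimately show ?thesis using \<delta> x_le by (intro exI[of _ "E + 1 + \<delta>"]) simp
  qed
qed

text \<open>The bound behind the three-variable case: if the slices of a set have sizes \<open>p c\<close>, the
  shadow exceeds the set by some \<open>E\<close> with \<open>E (E - 1) \<ge> 2 \<Sum> p\<close>.\<close>
lemma sum_slice_shadow_bound:
  assumes "\<forall>c>d. p c = 0"
  shows "\<exists>E. (\<Sum>c\<le>Suc d. slice_shadow_bound p c) = (\<Sum>c\<le>d. p c) + E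
    \<and> 2 * (\<Sum>c\<le>d. p c) + E \<le> E * E \<and> (0 < p 0 \<longrightarrow> p 0 < E)"
  using assms
proof (induction d arbitrary: p)
  case 0
  then have "(\<Sum>c\<le>Suc 0. slice_shadow_bound p c) = p 0 + (p 0 + of_bool (0 < p 0))"
    unfolding slice_shadow_bound_def by simp
  moreover have "(p 0 + 1) * (p 0 + 1) = p 0 * p 0 + 2 * p 0 + 1" by (simp add: algebra_simps)
  moreover have "p 0 \<le> p 0 * p 0" by simp
  ultimately show ?case by (intro exI[of _ "p 0 + of_bool (0 < p 0)"]) auto
next
  case (Suc d)
  define q where "q = (\<lambda>c. p (Suc c))"
  define A where "A = (\<Sum>c\<le>d. slice_shadow_bound q (Suc c))"
  obtain E where E: "(\<Sum>c\<le>Suc d. slice_shadow_bound q c) = (\<Sum>c\<le>d. q c) + E"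
      "2 * (\<Sum>c\<le>d. q c) + E \<le> E * E" "0 < q 0 \<longrightarrow> q 0 < E"
    using Suc.IH[of q] Suc.prems unfolding q_def by auto
  have shift: "slice_shadow_bound p (Suc (Suc c)) = slice_shadow_bound q (Suc c)" for c
    unfolding slice_shadow_bound_def q_def by simp
  have "(\<Sum>c\<le>Suc (Suc d). slice_shadow_bound p c)
      = slice_shadow_bound p 0 + (slice_shadow_bound p 1 + A)"
    unfolding A_def by (simp only: sum.atMost_Suc_shift shift) simp
  also have "\<dots> = p 0 + of_bool (0 < p 0) + max (q 0 + of_bool (0 < q 0)) (p 0) + A"
    unfolding slice_shadow_bound_def q_def by simp
  finally have N: "(\<Sum>c\<le>Suc (Suc d). slice_shadow_bound p c)
      = p 0 + of_bool (0 < p 0) + max (q 0 + of_bool (0 < q 0)) (p 0) + A" .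
  have S: "(\<Sum>c\<le>Suc d. p c) = p 0 + (\<Sum>c\<le>d. q c)"
    unfolding q_def by (simp only: sum.atMost_Suc_shift)
  have "(\<Sum>c\<le>Suc d. slice_shadow_bound q c) = q 0 + of_bool (0 < q 0) + A"
    unfolding A_def by (simp only: sum.atMost_Suc_shift) (simp add: slice_shadow_bound_def[of q 0])
  then have "(\<Sum>c\<le>d. q c) + E = q 0 + of_bool (0 < q 0) + A" using E(1) by simp
  then show ?case
    unfolding N S using slice_shadow_bound_step[OF E(2,3)] by simp
qed

lemma card_shadow_3_ge:
  assumes G: "G \<subseteq> monomials (Suc 2) d"
  obtains E where "2 * card G + E \<le> E * E" "card G + E \<le> card (shadow G)"
proof -
  have k: "(2::nat) \<le> 2" by simp
  define p where "p = (\<lambda>c. card (slice 2 c G))"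
  have fin: "finite (slice 2 c G)" for c
    using slice_monomials[OF G k] finite_monomials finite_subset by blast
  have "p c = 0" if "d < c" for c
    unfolding p_def using slice_eq_empty[OF G k that] by simp
  then obtain E where E: "(\<Sum>c\<le>Suc d. slice_shadow_bound p c) = (\<Sum>c\<le>d. p c) + E"
      "2 * (\<Sum>c\<le>d. p c) + E \<le> E * E"
    using sum_slice_shadow_bound[of d p] by auto
  have card_G: "card G = (\<Sum>c\<le>d. p c)"
    unfolding p_def using card_eq_sum_card_slice[OF G k order_refl] .
  have "slice_shadow_bound p c
      \<le> card (shadow (slice 2 c G) \<union> (if c = 0 then {} else slice 2 (c - 1) G))" for c
  proof -
    have "p c + of_bool (0 < p c) \<le> card (shadow (slice 2 c G))"
      using card_shadow_2_ge[OF slice_monomials[OF G k]] fin unfolding p_def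
      by (cases "slice 2 c G = {}") (auto simp: card_gt_0_iff)
    moreover have
      "max (card (shadow (slice 2 c G))) (card (if c = 0 then {} else slice 2 (c - 1) G))
        \<le> card (shadow (slice 2 c G) \<union> (if c = 0 then {} else slice 2 (c - 1) G))"
      using fin by (intro max_card_le_card_Un finite_shadow) auto
    ultimately show ?thesis unfolding slice_shadow_bound_def p_def by (auto split: if_splits)
  qed
  then have "(\<Sum>c\<le>Suc d. slice_shadow_bound p c) \<le> card (shadow G)"
    unfolding card_shadow_eq_sum[OF G k] by (intro sum_mono)
  then show ?thesis using that E card_G by simp
qed

lemma revlex_closed_slice:
  assumes S: "revlex_closed (Suc n) d S" and k: "k \<le> n" and c: "c \<le> d"
  shows "revlex_closed n (d - c) (slice k c S)"
  unfolding revlex.down_closed_def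
proof (intro conjI allI impI)
  have S_sub: "S \<subseteq> monomials (Suc n) d" using S unfolding revlex.down_closed_def by blast
  show "slice k c S \<subseteq> monomials n (d - c)" by (rule slice_monomials[OF S_sub k])
  fix x y assume y: "y \<in> slice k c S" and x: "x \<in> monomials n (d - c)" and less: "revlex_less x y"
  have len: "length x = n" "length y = n"
    using x y slice_monomials[OF S_sub k] unfolding monomials_def by auto
  have "ins_nth k c x \<in> monomials (Suc n) d" using ins_nth_monomials[OF x k, of c] c by simp
  moreover have "revlex_less (ins_nth k c x) (ins_nth k c y)"
    using revlex_less_ins_nth_iff[of x y k c] len k less by simp
  ultimately have "ins_nth k c x \<in> S"
    using S ins_nth_mem_of_slice[OF S_sub k y] unfolding revlex.down_closed_def by blast
  then have "del_nth k (ins_nth k c x) \<in> slice k c S"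
    using del_nth_mem_slice nth_ins_nth[of k x c] len k by metis
  then show "x \<in> slice k c S" using del_nth_ins_nth[of k x c] len k by simp
qed

lemma ins_nth_length: "ins_nth (length xs) c xs = xs @ [c]"
  by (induction xs) auto

lemma revlex_less_ins_last:
  assumes "length y = n" "x \<in> monomials (Suc n) d" "x ! n < c"
  shows "revlex_less (ins_nth n c y) x"
proof -
  have len: "length x = Suc n" using assms(2) unfolding monomials_def by simp
  then have ne: "x \<noteq> []" by auto
  then have "x = butlast x @ [x ! n]"
    using append_butlast_last_id[OF ne] last_conv_nth[OF ne] len by simp
  then show ?thesis
    using revlex_less_append[of y "butlast x" "[c]" "[x ! n]"] assms len
    unfolding ins_nth_length[of y, unfolded assms(1)] by simp
qed

lemma slice_last_eq_monomials:
  assumes S: "revlex_closed (Suc n) d S" and x: "x \<in> S" and c: "x ! n < c" "c \<le> d"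
  shows "slice n c S = monomials n (d - c)"
proof
  have S_sub: "S \<subseteq> monomials (Suc n) d" using S unfolding revlex.down_closed_def by blast
  show "slice n c S \<subseteq> monomials n (d - c)" by (rule slice_monomials[OF S_sub order_refl])
  show "monomials n (d - c) \<subseteq> slice n c S"
  proof
    fix y assume y: "y \<in> monomials n (d - c)"
    have len: "length y = n" using y unfolding monomials_def by simp
    have "ins_nth n c y \<in> monomials (Suc n) d"
      using ins_nth_monomials[OF y order_refl, of c] c by simp
    moreover have "revlex_less (ins_nth n c y) x"
      using revlex_less_ins_last[OF len _ c(1)] x S_sub by blast
    ultimately have "ins_nth n c y \<in> S" using S x unfolding revlex.down_closed_def by blast
    then have "del_nth n (ins_nth n c y) \<in> slice n c S"
      using del_nth_mem_slice[of "ins_nth n c y" S n] nth_ins_nth[of n y c] len by simp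
    then show "y \<in> slice n c S" using del_nth_ins_nth[of n y c] len by simp
  qed
qed

text \<open>The last coordinate dominates the revlex order, so a revlex-closed set sliced along it
  consists of empty slices, one revlex segment, and full slices.\<close>
lemma revlex_closed_slices_last:
  assumes S: "revlex_closed (Suc n) d S" and ne: "S \<noteq> {}"
  obtains c0 where "c0 \<le> d" "0 < card (slice n c0 S)" "\<And>c. c < c0 \<Longrightarrow> slice n c S = {}"
    "slice n c0 S = revlex_seg n (d - c0) (card (slice n c0 S))"
    "\<And>c. c0 < c \<Longrightarrow> c \<le> d \<Longrightarrow> slice n c S = monomials n (d - c)"
proof -
  have S_sub: "S \<subseteq> monomials (Suc n) d" using S unfolding revlex.down_closed_def by blast
  obtain x where "x \<in> S" using ne by blast
  then have "\<exists>c. slice n c S \<noteq> {}" using del_nth_mem_slice[of x S n] by blast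
  define c0 where "c0 = (LEAST c. slice n c S \<noteq> {})"
  have c0_ne: "slice n c0 S \<noteq> {}"
    unfolding c0_def using \<open>\<exists>c. slice n c S \<noteq> {}\<close> by (rule LeastI_ex)
  have below: "slice n c S = {}" if "c < c0" for c
    using not_less_Least[of c "\<lambda>c. slice n c S \<noteq> {}"] that unfolding c0_def by simp
  obtain x0 where x0: "x0 \<in> S" "x0 ! n = c0" using c0_ne unfolding slice_def by blast
  have c0: "c0 \<le> d" using nth_le_degree[of x0 "Suc n" d n] x0 S_sub by auto
  have "slice n c0 S = revlex_seg n (d - c0) (card (slice n c0 S))"
    using revlex.down_closed_eq_initial_seg[OF revlex_closed_slice[OF S order_refl c0]] .
  moreover have "0 < card (slice n c0 S)"
    using c0_ne finite_subset[OF slice_monomials[OF S_sub order_refl] finite_monomials]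
    by (simp add: card_gt_0_iff)
  ultimately show ?thesis
    using that c0 below slice_last_eq_monomials[OF S x0(1)] x0(2) by blast
qed

lemma double_sum_Suc_diff: "2 * (\<Sum>c\<in>{c0<..d}. Suc (d - c)) = (d - c0) * Suc (d - c0)"
proof -
  have "(\<Sum>c\<in>{c0<..d}. Suc (d - c)) = (\<Sum>i\<in>{Suc 0..d - c0}. i)"
    by (rule sum.reindex_bij_witness[of _ "\<lambda>i. Suc d - i" "\<lambda>c. Suc (d - c)"]) auto
  then show ?thesis using double_gauss_sum_from_Suc_0[of "d - c0", where 'a = nat] by simp
qed

context
  fixes L :: "nat list set" and d c0 q :: nat
  assumes L: "L \<subseteq> monomials (Suc 2) d" and c0: "c0 \<le> d" and q: "0 < q"
    and below: "\<And>c. c < c0 \<Longrightarrow> slice 2 c L = {}"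
    and at: "slice 2 c0 L = revlex_seg 2 (d - c0) q" and card_at: "card (slice 2 c0 L) = q"
    and above: "\<And>c. c0 < c \<Longrightarrow> c \<le> d \<Longrightarrow> slice 2 c L = monomials 2 (d - c)"
begin

lemma card_shadow_slice_layered_le:
  assumes c: "c \<le> Suc d"
  shows "card (shadow (slice 2 c L) \<union> (if c = 0 then {} else slice 2 (c - 1) L))
    \<le> card (slice 2 c L) + of_bool (c0 \<le> c)"
proof -
  consider "c < c0" | "c = c0" | "c0 < c" by linarith
  then show ?thesis
  proof cases
    case 1
    then show ?thesis using below by simp
  next
    case 2
    then have "shadow (slice 2 c L) \<union> (if c = 0 then {} else slice 2 (c - 1) L)
        = shadow (revlex_seg 2 (d - c0) q)"
      using at below by simp
    then show ?thesis using card_shadow_revlex_seg_2_le[of "d - c0" q] 2 card_at by simp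
  next
    case 3
    have k: "(2::nat) \<le> 2" by simp
    have "shadow (slice 2 c L) \<subseteq> monomials 2 (Suc d - c)"
    proof (cases "c \<le> d")
      case True
      then show ?thesis
        using shadow_monomials[OF slice_monomials[OF L k]] by (simp add: Suc_diff_le)
    next
      case False
      then show ?thesis using slice_eq_empty[OF L k] by simp
    qed
    moreover have "slice 2 (c - 1) L \<subseteq> monomials 2 (Suc d - c)"
      using slice_monomials[OF L k, of "c - 1"] 3 c by (simp add: Suc_diff_le)
    ultimately have
      "card (shadow (slice 2 c L) \<union> slice 2 (c - 1) L) \<le> card (monomials 2 (Suc d - c))"
      using finite_monomials by (intro card_mono) auto
    also have "\<dots> \<le> card (slice 2 c L) + 1"
      using above[OF 3] card_monomials_2 c by (cases "c \<le> d") (auto simp: Suc_diff_le)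
    finally show ?thesis using 3 by simp
  qed
qed

lemma card_shadow_layered_le: "card (shadow L) \<le> card L + (d - c0 + 2)"
proof -
  have k: "(2::nat) \<le> 2" by simp
  have "card (shadow L)
      = (\<Sum>c\<le>Suc d. card (shadow (slice 2 c L) \<union> (if c = 0 then {} else slice 2 (c - 1) L)))"
    by (rule card_shadow_eq_sum[OF L k])
  also have "\<dots> \<le> (\<Sum>c\<le>Suc d. card (slice 2 c L) + of_bool (c0 \<le> c))"
    by (rule sum_mono) (use card_shadow_slice_layered_le in auto)
  also have "\<dots> = (\<Sum>c\<le>Suc d. card (slice 2 c L)) + (\<Sum>c\<le>Suc d. of_bool (c0 \<le> c))"
    by (rule sum.distrib)
  also have "(\<Sum>c\<le>Suc d. card (slice 2 c L)) = card L"
    using card_eq_sum_card_slice[OF L k, of "Suc d"] by simp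
  also have "(\<Sum>c\<le>Suc d. of_bool (c0 \<le> c)) = card ({..Suc d} \<inter> {c. c0 \<le> c})"
    by (metis (mono_tags) finite_atMost of_nat_id sum_of_bool_eq)
  also have "{..Suc d} \<inter> {c. c0 \<le> c} = {c0..Suc d}" by auto
  finally show ?thesis using c0 by simp
qed

lemma card_layered_ge: "2 + (d - c0) * Suc (d - c0) \<le> 2 * card L"
proof -
  have k: "(2::nat) \<le> 2" by simp
  have "(\<Sum>c\<le>d. (if c = c0 then q else 0) + (if c0 < c then Suc (d - c) else 0))
      \<le> (\<Sum>c\<le>d. card (slice 2 c L))"
    by (intro sum_mono) (use above card_monomials_2 card_at in auto)
  also have "\<dots> = card L" using card_eq_sum_card_slice[OF L k order_refl] by simp
  finally have "(\<Sum>c\<le>d. if c = c0 then q else 0) + (\<Sum>c\<le>d. if c0 < c then Suc (d - c) else 0)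
      \<le> card L"
    by (simp only: sum.distrib)
  moreover have "(\<Sum>c\<le>d. if c0 < c then Suc (d - c) else 0) = (\<Sum>c\<in>{c0<..d}. Suc (d - c))"
  proof -
    have "{..d} \<inter> {c. c0 < c} = {c0<..d}" by auto
    then show ?thesis by (simp add: sum.If_cases)
  qed
  ultimately have "q + (\<Sum>c\<in>{c0<..d}. Suc (d - c)) \<le> card L" using c0 by simp
  then show ?thesis using double_sum_Suc_diff[of d c0] q by linarith
qed

end

lemma macaulay_holds_3: "macaulay_holds 3"
  unfolding macaulay_holds_def
proof (intro allI impI)
  have three: "(3::nat) = Suc 2" by simp
  fix d G assume "G \<subseteq> monomials 3 d"
  then have G: "G \<subseteq> monomials (Suc 2) d" unfolding three .
  let ?L = "revlex_seg (Suc 2) d (card G)"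
  have "card (shadow ?L) \<le> card (shadow G)"
  proof (cases "G = {}")
    case True
    then show ?thesis by (simp add: revlex_seg_0)
  next
    case False
    have card_L: "card ?L = card G"
      using card_mono[OF finite_monomials G] by (simp add: card_revlex_seg_le)
    then have "?L \<noteq> {}" using False G finite_monomials finite_subset by fastforce
    then obtain c0 where c0: "c0 \<le> d" "0 < card (slice 2 c0 ?L)" "\<And>c. c < c0 \<Longrightarrow> slice 2 c ?L = {}"
      "slice 2 c0 ?L = revlex_seg 2 (d - c0) (card (slice 2 c0 ?L))"
      "\<And>c. c0 < c \<Longrightarrow> c \<le> d \<Longrightarrow> slice 2 c ?L = monomials 2 (d - c)"
      using revlex_closed_slices_last[OF revlex.down_closed_initial_seg] by blast
    note layered = revlex.initial_seg_subset c0(1,2,3,4) refl c0(5)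
    define t where "t = d - c0"
    obtain E where E: "2 * card G + E \<le> E * E" "card G + E \<le> card (shadow G)"
      using card_shadow_3_ge[OF G] .
    have "t + 2 \<le> E"
    proof (rule ccontr)
      assume "\<not> t + 2 \<le> E"
      then have "E \<le> t + 1" by simp
      then have "E * E \<le> E * t + E" "E * t \<le> t * t + t"
        using mult_le_mono2[of E "t + 1" E] mult_le_mono1[of E "t + 1" t]
          by (simp_all add: algebra_simps)
      moreover have "2 + t * t + t \<le> 2 * card G"
        using card_layered_ge[OF layered] card_L unfolding t_def by (simp add: algebra_simps)
      ultimately show False using E(1) by linarith
    qed
    moreover have "card (shadow ?L) \<le> card G + (t + 2)"
      using card_shadow_layered_le[OF layered] card_L unfolding t_def by simp
    ultimately show ?thesis using E(2) by simp
  qed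
  then show "card (shadow (revlex_seg 3 d (card G))) \<le> card (shadow G)" unfolding three .
qed

lemma macaulay_theorem: "1 \<le> n \<Longrightarrow> macaulay_holds n"
proof (induction n rule: less_induct)
  case (less n)
  consider "n = 1" | "n = 2" | "n = 3" | "4 \<le> n" using less.prems by linarith
  then show ?case
  proof cases
    case 4
    then obtain m where "n = Suc m" "3 \<le> m" by (cases n) auto
    then show ?thesis using less.IH macaulay_holds_Suc by simp
  qed (use macaulay_holds_1 macaulay_holds_2 macaulay_holds_3 in blast)+
qed


lemma sq_less_insert_greater:
  assumes fin: "finite A" "finite B" and A: "\<forall>x\<in>A. x < a" and B: "\<forall>x\<in>B. x < b"
  shows "sq_less (insert a A) (insert b B) \<longleftrightarrow> a < b \<or> (a = b \<and> sq_less A B)"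
proof -
  let ?D = "(insert a A - insert b B) \<union> (insert b B - insert a A)"
  consider "a < b" | "b < a" | "a = b" by linarith
  then show ?thesis
  proof cases
    case 1
    then have "Max ?D = b" using A B fin by (intro Max_eqI) force+
    moreover have "b \<notin> insert a A" using 1 A by auto
    then have "insert a A \<noteq> insert b B" by blast
    ultimately show ?thesis using 1 unfolding sq_less_def by simp
  next
    case 2
    then have "Max ?D = a" using A B fin by (intro Max_eqI) force+
    then show ?thesis using 2 B unfolding sq_less_def by auto
  next
    case 3
    have "a \<notin> A" "a \<notin> B" using A B 3 by auto
    then have "?D = (A - B) \<union> (B - A)" "insert a A = insert b B \<longleftrightarrow> A = B" using 3 by auto
    moreover have "Max ((A - B) \<union> (B - A)) \<in> (A - B) \<union> (B - A)" if "A \<noteq> B"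
      using that fin by (intro Max_in) auto
    ultimately show ?thesis using 3 \<open>a \<notin> A\<close> \<open>a \<notin> B\<close> unfolding sq_less_def by auto
  qed
qed

text \<open>The set whose successive gaps are \<open>a\<^sub>0 + 1, a\<^sub>1 + 1, \<dots>\<close>, starting from 0.\<close>
fun gap_set :: "nat list \<Rightarrow> nat set" where
  "gap_set [] = {}"
| "gap_set (a # as) = insert (Suc a) ((\<lambda>x. x + Suc a) ` gap_set as)"

lemma gap_set_pos: "x \<in> gap_set as \<Longrightarrow> 0 < x"
  by (induction as arbitrary: x) auto

lemma gap_set_le: "x \<in> gap_set as \<Longrightarrow> x \<le> sum_list as + length as"
  by (induction as arbitrary: x) fastforce+

lemma finite_gap_set: "finite (gap_set as)"
  by (induction as) auto

lemma gap_set_snoc: "gap_set (as @ [a]) = insert (sum_list as + length as + Suc a) (gap_set as)"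
  by (induction as) (auto simp: algebra_simps)

lemma max_mem_gap_set: "as \<noteq> [] \<Longrightarrow> sum_list as + length as \<in> gap_set as"
  by (induction as rule: rev_induct) (auto simp: gap_set_snoc)

lemma card_gap_set: "card (gap_set as) = length as"
proof (induction as rule: rev_induct)
  case (snoc a as)
  have "sum_list as + length as + Suc a \<notin> gap_set as" using gap_set_le by fastforce
  then show ?case using snoc finite_gap_set[of as] by (simp add: gap_set_snoc)
qed simp

lemma gap_set_inj: "length as = length bs \<Longrightarrow> gap_set as = gap_set bs \<Longrightarrow> as = bs"
proof (induction as arbitrary: bs rule: rev_induct)
  case (snoc a as)
  obtain bs' b where bs: "bs = bs' @ [b]" using snoc.prems(1) by (cases bs rule: rev_exhaust) auto
  then have len: "length as = length bs'" using snoc.prems(1) by simp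
  let ?ma = "sum_list as + length as + Suc a" and ?mb = "sum_list bs' + length bs' + Suc b"
  have sets: "insert ?ma (gap_set as) = insert ?mb (gap_set bs')"
    using snoc.prems(2) unfolding bs gap_set_snoc .
  have "?ma \<notin> gap_set as" "?mb \<notin> gap_set bs'" using gap_set_le by fastforce+
  moreover have "?ma = ?mb"
  proof -
    have "?mb \<le> ?ma" using sets gap_set_le[of ?mb as]
      by (metis insert_iff le_add1 le_trans nat_le_linear)
    moreover have "?ma \<le> ?mb" using sets gap_set_le[of ?ma bs']
      by (metis insert_iff le_add1 le_trans nat_le_linear)
    ultimately show ?thesis by simp
  qed
  ultimately have "gap_set as = gap_set bs'" using sets by (simp add: insert_ident)
  then have "as = bs'" using snoc.IH len by simp
  then show ?case using \<open>?ma = ?mb\<close> bs by simp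
qed simp

lemma gap_set_surj: "finite u \<Longrightarrow> 0 \<notin> u \<Longrightarrow> \<exists>as. length as = card u \<and> gap_set as = u"
proof (induction "card u" arbitrary: u)
  case 0
  then show ?case by (intro exI[of _ "[]"]) simp
next
  case (Suc n)
  define m0 where "m0 = Min u"
  have "u \<noteq> {}" using Suc.hyps(2) by auto
  then have m0: "m0 \<in> u" "\<forall>x\<in>u. m0 \<le> x" unfolding m0_def using Suc.prems by auto
  then obtain a where a: "m0 = Suc a" using Suc.prems by (cases m0) auto
  define u' where "u' = (\<lambda>x. x - Suc a) ` (u - {m0})"
  have inj: "inj_on (\<lambda>x. x - Suc a) (u - {m0})"
    by (rule inj_onI) (use m0 a in force)
  have "card u' = n" unfolding u'_def using card_image[OF inj] Suc.hyps(2) Suc.prems m0 by simp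
  moreover have "0 \<notin> u'" "finite u'" unfolding u'_def using m0 a Suc.prems by force+
  ultimately obtain as where as: "length as = n" "gap_set as = u'" using Suc.hyps(1) by metis
  have "(\<lambda>x. x + Suc a) ` u' = u - {m0}"
    unfolding u'_def image_image by (rule image_cong[where g = id, simplified]) (use m0 a in force)+
  then have "gap_set (a # as) = u" using as a m0 by auto
  then show ?case using as Suc.hyps(2) by (intro exI[of _ "a # as"]) simp
qed

lemma sq_less_gap_set:
  "length as = length bs \<Longrightarrow>
    sq_less (gap_set as) (gap_set bs) \<longleftrightarrow>
      sum_list as < sum_list bs \<or> (sum_list as = sum_list bs \<and> revlex_less as bs)"
proof (induction as arbitrary: bs rule: rev_induct)
  case Nil then show ?case by (simp add: sq_less_def)
next
  case (snoc a as)
  obtain bs' b where bs: "bs = bs' @ [b]" using snoc.prems by (cases bs rule: rev_exhaust) auto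
  then have len: "length as = length bs'" using snoc.prems by simp
  have "sq_less (gap_set (as @ [a])) (gap_set bs)
      \<longleftrightarrow> sum_list as + length as + Suc a < sum_list bs' + length bs' + Suc b
        \<or> (sum_list as + length as + Suc a = sum_list bs' + length bs' + Suc b
          \<and> sq_less (gap_set as) (gap_set bs'))"
    unfolding bs gap_set_snoc using finite_gap_set gap_set_le
    by (intro sq_less_insert_greater) fastforce+
  also have "\<dots> \<longleftrightarrow> sum_list (as @ [a]) < sum_list bs
      \<or> (sum_list (as @ [a]) = sum_list bs \<and> revlex_less (as @ [a]) bs)"
    using snoc.IH[OF len] revlex_less_append[OF len, of "[a]" "[b]"] bs len by auto
  finally show ?case .
qed

definition shift_at :: "nat \<Rightarrow> nat \<Rightarrow> nat" where
  "shift_at k j = (if j < k then j else Suc j)"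

lemma shift_at_gap_set_Cons_le:
  "k \<le> Suc a \<Longrightarrow> shift_at k ` gap_set (a # as) = gap_set (Suc a # as)"
proof -
  assume k: "k \<le> Suc a"
  have "shift_at k ` (\<lambda>x. x + Suc a) ` gap_set as = (\<lambda>x. x + Suc (Suc a)) ` gap_set as"
    unfolding image_image by (rule image_cong) (use k in \<open>auto simp: shift_at_def\<close>)
  then show ?thesis using k by (simp add: shift_at_def)
qed

lemma shift_at_gap_set_Cons_gr:
  "Suc a < k \<Longrightarrow> shift_at k ` gap_set (a # as)
    = insert (Suc a) ((\<lambda>x. x + Suc a) ` shift_at (k - Suc a) ` gap_set as)"
proof -
  assume k: "Suc a < k"
  have "shift_at k ` (\<lambda>x. x + Suc a) ` gap_set as
      = (\<lambda>x. x + Suc a) ` shift_at (k - Suc a) ` gap_set as"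
    unfolding image_image by (rule image_cong) (use k in \<open>auto simp: shift_at_def\<close>)
  then show ?thesis using k by (simp add: shift_at_def)
qed

lemma shift_at_gap_set:
  "1 \<le> k \<Longrightarrow> shift_at k ` gap_set as = gap_set as
    \<or> (\<exists>i<length as. shift_at k ` gap_set as = gap_set (as[i := Suc (as ! i)]))"
proof (induction as arbitrary: k)
  case (Cons a as)
  show ?case
  proof (cases "k \<le> Suc a")
    case True
    then have "shift_at k ` gap_set (a # as) = gap_set ((a # as)[0 := Suc ((a # as) ! 0)])"
      using shift_at_gap_set_Cons_le by simp
    then show ?thesis by blast
  next
    case False
    then have shift: "shift_at k ` gap_set (a # as)
        = insert (Suc a) ((\<lambda>x. x + Suc a) ` shift_at (k - Suc a) ` gap_set as)"
      using shift_at_gap_set_Cons_gr by simp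
    have "1 \<le> k - Suc a" using False by simp
    then consider "shift_at (k - Suc a) ` gap_set as = gap_set as"
      | i where "i < length as"
        "shift_at (k - Suc a) ` gap_set as = gap_set (as[i := Suc (as ! i)])"
      using Cons.IH by blast
    then show ?thesis
    proof cases
      case (2 i)
      then have "shift_at k ` gap_set (a # as)
          = gap_set ((a # as)[Suc i := Suc ((a # as) ! Suc i)])"
        using shift by simp
      then show ?thesis using 2 by (intro disjI2 exI[of _ "Suc i"]) simp
    qed (use shift in simp)
  qed
qed simp

lemma gap_set_incr_eq_shift_at:
  "i < length as \<Longrightarrow> \<exists>k\<ge>1. shift_at k ` gap_set as = gap_set (as[i := Suc (as ! i)])"
proof (induction as arbitrary: i)
  case (Cons a as)
  show ?case
  proof (cases i)
    case 0
    then show ?thesis using shift_at_gap_set_Cons_le[of 1 a as] by (intro exI[of _ 1]) simp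
  next
    case (Suc i')
    then have "i' < length as" using Cons.prems by simp
    then obtain k where k: "1 \<le> k" "shift_at k ` gap_set as = gap_set (as[i' := Suc (as ! i')])"
      using Cons.IH by blast
    then show ?thesis
      using shift_at_gap_set_Cons_gr[of a "k + Suc a" as] Suc by (intro exI[of _ "k + Suc a"]) simp
  qed
qed simp

lemma shift_at_Inc1: "1 \<le> k \<Longrightarrow> shift_at k \<in> Inc1"
  unfolding Inc1_def shift_at_def by auto

lemma id_Inc1: "(\<lambda>j. j) \<in> Inc1"
  unfolding Inc1_def by auto

lemma le_Inc1: "\<pi> \<in> Inc1 \<Longrightarrow> 1 \<le> j \<Longrightarrow> j \<le> \<pi> j"
proof (induction j)
  case 0 then show ?case by simp
next
  case (Suc j)
  show ?case
  proof (cases "j = 0")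
    case True then show ?thesis using Suc.prems unfolding Inc1_def by auto
  next
    case False
    then have "j \<le> \<pi> j" using Suc by simp
    moreover have "\<pi> j < \<pi> (Suc j)" using Suc.prems False unfolding Inc1_def by auto
    ultimately show ?thesis by simp
  qed
qed

text \<open>Strict monotonicity and \<open>\<pi> j \<le> j + 1\<close> leave only the identity and the maps
  that skip a single value.\<close>
lemma Inc1_cases:
  assumes p: "\<pi> \<in> Inc1"
  shows "(\<forall>j\<ge>1. \<pi> j = j) \<or> (\<exists>k\<ge>1. \<forall>j\<ge>1. \<pi> j = shift_at k j)"
proof (cases "\<forall>j\<ge>1. \<pi> j = j")
  case True then show ?thesis by simp
next
  case False
  then have ex: "\<exists>j. 1 \<le> j \<and> \<pi> j \<noteq> j" by auto
  define k where "k = (LEAST j. 1 \<le> j \<and> \<pi> j \<noteq> j)"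
  have k1: "1 \<le> k" "\<pi> k \<noteq> k" unfolding k_def using LeastI_ex[OF ex] by auto
  have blw: "\<pi> j = j" if "1 \<le> j" "j < k" for j
    using not_less_Least[of j "\<lambda>j. 1 \<le> j \<and> \<pi> j \<noteq> j"] that unfolding k_def by auto
  have ub: "\<pi> j \<le> Suc j" if "1 \<le> j" for j using p that unfolding Inc1_def by auto
  have abv: "\<pi> j = Suc j" if "k \<le> j" for j
    using that
  proof (induction j rule: dec_induct)
    case base
    then show ?case using le_Inc1[OF p k1(1)] ub[OF k1(1)] k1(2) by simp
  next
    case (step j)
    have j1: "1 \<le> j" using step k1 by simp
    have "\<forall>j\<ge>1. \<pi> j < \<pi> (Suc j)" using p unfolding Inc1_def by blast
    then have "\<pi> j < \<pi> (Suc j)" using j1 by blast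
    then show ?case using step ub[of "Suc j"] by simp
  qed
  have "\<forall>j\<ge>1. \<pi> j = shift_at k j"
    unfolding shift_at_def using blw abv by (metis not_le)
  then show ?thesis using k1 by blast
qed

lemma Inc1_image: "\<pi> \<in> Inc1 \<Longrightarrow> 0 \<notin> u \<Longrightarrow> \<pi> ` u = u \<or> (\<exists>k\<ge>1. \<pi> ` u = shift_at k ` u)"
proof -
  assume p: "\<pi> \<in> Inc1" and u: "0 \<notin> u"
  have pos: "\<And>j. j \<in> u \<Longrightarrow> 1 \<le> j" using u by (metis less_one not_le)
  from Inc1_cases[OF p] show ?thesis
  proof
    assume "\<forall>j\<ge>1. \<pi> j = j"
    then have "\<pi> ` u = (\<lambda>j. j) ` u" by (intro image_cong) (auto dest: pos)
    then show ?thesis by simp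
  next
    assume "\<exists>k\<ge>1. \<forall>j\<ge>1. \<pi> j = shift_at k j"
    then obtain k where k: "1 \<le> k" "\<forall>j\<ge>1. \<pi> j = shift_at k j" by blast
    then have "\<pi> ` u = shift_at k ` u" by (intro image_cong) (auto dest: pos)
    then show ?thesis using k by blast
  qed
qed

lemma Inc1_less: "\<pi> \<in> Inc1 \<Longrightarrow> 1 \<le> i \<Longrightarrow> i < j \<Longrightarrow> \<pi> i < \<pi> j"
proof (induction j)
  case (Suc j)
  then have "\<pi> j < \<pi> (Suc j)" unfolding Inc1_def by auto
  then show ?case using Suc by (cases "i = j") auto
qed simp

lemma inj_on_Inc1:
  assumes "\<pi> \<in> Inc1" "0 \<notin> u"
  shows "inj_on \<pi> u"
proof (rule inj_onI)
  fix x y assume "x \<in> u" "y \<in> u" "\<pi> x = \<pi> y"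
  moreover have "1 \<le> x" "1 \<le> y" using \<open>x \<in> u\<close> \<open>y \<in> u\<close> assms(2) by (metis less_one not_le)+
  ultimately show "x = y" using Inc1_less[OF assms(1)] by (metis linorder_neqE_nat less_irrefl)
qed

text \<open>The last exponent is determined by the degree and is dropped.\<close>
definition mono_set :: "nat list \<Rightarrow> nat set" where
  "mono_set c = gap_set (butlast c)"

definition bounded_dsets :: "nat \<Rightarrow> nat \<Rightarrow> nat set set" where
  "bounded_dsets d B = {u \<in> dsets d. \<forall>x\<in>u. x \<le> B}"

lemma monomials_SucE:
  assumes "c \<in> monomials (Suc d) T"
  obtains as z where "c = as @ [z]" "length as = d" "sum_list as + z = T"
proof -
  have "length c = Suc d" "sum_list c = T" using assms unfolding monomials_def by auto
  moreover obtain as z where "c = as @ [z]" using calculation(1) by (cases c rule: rev_exhaust) auto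
  ultimately show ?thesis using that by simp
qed

lemma mono_set_bounded: "c \<in> monomials (Suc d) T \<Longrightarrow> mono_set c \<in> bounded_dsets d (T + d)"
proof -
  assume "c \<in> monomials (Suc d) T"
  then obtain as z where c: "c = as @ [z]" "length as = d" "sum_list as + z = T"
    by (rule monomials_SucE)
  then have "\<forall>x\<in>gap_set as. x \<le> T + d" using gap_set_le[of _ as] by fastforce
  moreover have "0 \<notin> gap_set as" using gap_set_pos by blast
  ultimately show ?thesis
    unfolding bounded_dsets_def dsets_def mono_set_def c
    using c finite_gap_set card_gap_set by simp
qed

lemma inj_on_mono_set: "inj_on mono_set (monomials (Suc d) T)"
proof (rule inj_onI)
  fix c c' assume "c \<in> monomials (Suc d) T" "c' \<in> monomials (Suc d) T"
    and eq: "mono_set c = mono_set c'"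
  then obtain as z as' z' where
    c: "c = as @ [z]" "length as = d" "sum_list as + z = T" and
    c': "c' = as' @ [z']" "length as' = d" "sum_list as' + z' = T"
    by (metis monomials_SucE)
  then have "as = as'" using gap_set_inj eq unfolding mono_set_def by simp
  then show "c = c'" using c c' by simp
qed

lemma bounded_dsets_subset_image_mono_set:
  assumes u: "u \<in> bounded_dsets d (T + d)"
  shows "\<exists>c\<in>monomials (Suc d) T. mono_set c = u"
proof -
  obtain as where as: "length as = d" "gap_set as = u"
    using u gap_set_surj unfolding bounded_dsets_def dsets_def by blast
  have "sum_list as \<le> T"
  proof (cases "as = []")
    case False
    then have "sum_list as + length as \<in> u" using max_mem_gap_set as by blast
    then show ?thesis using u as unfolding bounded_dsets_def by auto
  qed simp
  then have "as @ [T - sum_list as] \<in> monomials (Suc d) T" unfolding monomials_def using as by simp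
  moreover have "mono_set (as @ [T - sum_list as]) = u" unfolding mono_set_def using as by simp
  ultimately show ?thesis by blast
qed

lemma image_mono_set: "mono_set ` monomials (Suc d) T = bounded_dsets d (T + d)"
  using mono_set_bounded bounded_dsets_subset_image_mono_set by blast

lemma revlex_less_iff_sq_less:
  assumes "c \<in> monomials (Suc d) T" "c' \<in> monomials (Suc d) T"
  shows "revlex_less c' c \<longleftrightarrow> sq_less (mono_set c') (mono_set c)"
proof -
  obtain as z where c: "c = as @ [z]" "length as = d" "sum_list as + z = T"
    using assms(1) by (rule monomials_SucE)
  obtain as' z' where c': "c' = as' @ [z']" "length as' = d" "sum_list as' + z' = T"
    using assms(2) by (rule monomials_SucE)
  have len: "length as' = length as" using c c' by simp
  have "revlex_less c' c \<longleftrightarrow> z < z' \<or> (z' = z \<and> revlex_less as' as)"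
    using revlex_less_append[OF len, of "[z']" "[z]"] c c' by auto
  also have "\<dots> \<longleftrightarrow> sum_list as' < sum_list as \<or> (sum_list as' = sum_list as \<and> revlex_less as' as)"
    using c c' by auto
  also have "\<dots> \<longleftrightarrow> sq_less (mono_set c') (mono_set c)"
    unfolding mono_set_def c c' using sq_less_gap_set[OF len] by simp
  finally show ?thesis .
qed

lemma sq_less_bounded:
  assumes fin: "finite u" "finite v" and ub: "\<forall>x\<in>u. x \<le> B" and less: "sq_less v u"
  shows "\<forall>x\<in>v. x \<le> B"
proof (rule ccontr)
  assume "\<not> (\<forall>x\<in>v. x \<le> B)"
  then obtain y where y: "y \<in> v" "B < y" by auto
  then have "y \<le> Max ((v - u) \<union> (u - v))" using ub fin by (intro Max_ge) auto
  moreover have "Max ((v - u) \<union> (u - v)) \<in> u" using less unfolding sq_less_def by simp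
  ultimately show False using ub y by fastforce
qed

lemma card_sq_less_mono_set:
  assumes c: "c \<in> monomials (Suc d) T"
  shows "card {v \<in> dsets d. sq_less v (mono_set c)} = revlex_rank (Suc d) T c"
proof -
  have "{v \<in> dsets d. sq_less v (mono_set c)}
      = mono_set ` {c'\<in>monomials (Suc d) T. revlex_less c' c}"
  proof (intro set_eqI iffI)
    fix v assume v: "v \<in> {v \<in> dsets d. sq_less v (mono_set c)}"
    have "mono_set c \<in> bounded_dsets d (T + d)" by (rule mono_set_bounded[OF c])
    then have "v \<in> bounded_dsets d (T + d)"
      using sq_less_bounded[of "mono_set c" v "T + d"] v
      unfolding dsets_def bounded_dsets_def by blast
    then obtain c' where c': "c' \<in> monomials (Suc d) T" "mono_set c' = v"
      using bounded_dsets_subset_image_mono_set by blast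
    then have "revlex_less c' c" using revlex_less_iff_sq_less[OF c c'(1)] v by simp
    then show "v \<in> mono_set ` {c'\<in>monomials (Suc d) T. revlex_less c' c}" using c' by blast
  next
    fix v assume "v \<in> mono_set ` {c'\<in>monomials (Suc d) T. revlex_less c' c}"
    then obtain c' where c': "c' \<in> monomials (Suc d) T" "revlex_less c' c" "v = mono_set c'"
      by blast
    then show "v \<in> {v \<in> dsets d. sq_less v (mono_set c)}"
      using mono_set_bounded[OF c'(1)] revlex_less_iff_sq_less[OF c c'(1)]
      unfolding bounded_dsets_def by blast
  qed
  also have "card \<dots> = revlex_rank (Suc d) T c"
    unfolding revlex.rank_def by (rule card_image) (rule inj_on_subset[OF inj_on_mono_set], blast)
  finally show ?thesis .
qed

lemma shadow_singleton_snoc: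
  "shadow {as @ [z]} = insert (as @ [Suc z]) ((\<lambda>i. as[i := Suc (as ! i)] @ [z]) ` {..<length as})"
proof (intro set_eqI iffI)
  fix m assume "m \<in> shadow {as @ [z]}"
  then obtain i where i: "i < Suc (length as)" "m = (as @ [z])[i := Suc ((as @ [z]) ! i)]"
    unfolding shadow_def by auto
  then show "m \<in> insert (as @ [Suc z]) ((\<lambda>i. as[i := Suc (as ! i)] @ [z]) ` {..<length as})"
    by (cases "i < length as") (auto simp: list_update_append nth_append)
next
  fix m assume "m \<in> insert (as @ [Suc z]) ((\<lambda>i. as[i := Suc (as ! i)] @ [z]) ` {..<length as})"
  then consider "m = (as @ [z])[length as := Suc ((as @ [z]) ! length as)]"
    | i where "i < length as" "m = (as @ [z])[i := Suc ((as @ [z]) ! i)]"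
    by (auto simp: list_update_append nth_append)
  then show "m \<in> shadow {as @ [z]}" unfolding shadow_def by cases force+
qed

lemma Inc1_images_gap_set:
  "{\<pi> ` gap_set as | \<pi>. \<pi> \<in> Inc1} =
    insert (gap_set as) ((\<lambda>i. gap_set (as[i := Suc (as ! i)])) ` {..<length as})"
proof (intro set_eqI iffI)
  fix w assume "w \<in> {\<pi> ` gap_set as | \<pi>. \<pi> \<in> Inc1}"
  then obtain \<pi> where \<pi>: "\<pi> \<in> Inc1" "w = \<pi> ` gap_set as" by blast
  have "0 \<notin> gap_set as" using gap_set_pos by blast
  then consider "\<pi> ` gap_set as = gap_set as"
    | k where "1 \<le> k" "\<pi> ` gap_set as = shift_at k ` gap_set as"
    using Inc1_image[OF \<pi>(1) \<open>0 \<notin> gap_set as\<close>] by blast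
  then show "w \<in> insert (gap_set as) ((\<lambda>i. gap_set (as[i := Suc (as ! i)])) ` {..<length as})"
  proof cases
    case (2 k)
    then show ?thesis using shift_at_gap_set[OF 2(1), of as] \<pi>(2) by auto
  qed (use \<pi>(2) in simp)
next
  fix w assume "w \<in> insert (gap_set as) ((\<lambda>i. gap_set (as[i := Suc (as ! i)])) ` {..<length as})"
  then consider "w = gap_set as" | i where "i < length as" "w = gap_set (as[i := Suc (as ! i)])"
    by blast
  then show "w \<in> {\<pi> ` gap_set as | \<pi>. \<pi> \<in> Inc1}"
  proof cases
    case 1
    then have "w = (\<lambda>j. j) ` gap_set as" by simp
    then show ?thesis using id_Inc1 by blast
  next
    case (2 i)
    obtain k where "1 \<le> k" "shift_at k ` gap_set as = gap_set (as[i := Suc (as ! i)])"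
      using gap_set_incr_eq_shift_at[OF 2(1)] by blast
    then show ?thesis using shift_at_Inc1 2(2) by blast
  qed
qed

lemma IncF_image_mono_set:
  assumes G: "G \<subseteq> monomials (Suc d) T"
  shows "IncF (mono_set ` G) = mono_set ` shadow G"
proof -
  have "{\<pi> ` mono_set c | \<pi>. \<pi> \<in> Inc1} = mono_set ` shadow {c}" if c: "c \<in> G" for c
  proof -
    obtain as z where c_eq: "c = as @ [z]" using c G by (meson monomials_SucE subsetD)
    show ?thesis
      unfolding c_eq mono_set_def shadow_singleton_snoc Inc1_images_gap_set
        by (simp add: image_image)
  qed
  moreover have "IncF (mono_set ` G) = (\<Union>c\<in>G. {\<pi> ` mono_set c | \<pi>. \<pi> \<in> Inc1})"
  proof (intro set_eqI iffI)
    fix w assume "w \<in> IncF (mono_set ` G)"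
    then obtain c \<pi> where "c \<in> G" "w = \<pi> ` mono_set c" "\<pi> \<in> Inc1" unfolding IncF_def by blast
    then show "w \<in> (\<Union>c\<in>G. {\<pi> ` mono_set c | \<pi>. \<pi> \<in> Inc1})" by blast
  qed (auto simp: IncF_def)
  ultimately have "IncF (mono_set ` G) = (\<Union>c\<in>G. mono_set ` shadow {c})" by simp
  also have "\<dots> = mono_set ` (\<Union>c\<in>G. shadow {c})" by (rule image_UN[symmetric])
  also have "(\<Union>c\<in>G. shadow {c}) = shadow G" unfolding shadow_def by blast
  finally show ?thesis .
qed

lemma finite_sq_less_pred: "finite u \<Longrightarrow> finite {v \<in> dsets d. sq_less v u}"
proof -
  assume fin: "finite u"
  have "\<forall>x\<in>u. x \<le> Max (insert 0 u)" using fin by simp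
  then have "{v \<in> dsets d. sq_less v u} \<subseteq> Pow {..Max (insert 0 u)}"
    using sq_less_bounded[OF fin] unfolding dsets_def by blast
  then show ?thesis by (rule finite_subset) simp
qed

lemma bounded_dsets_subset_sq_less:
  assumes u: "finite u" "x \<in> u" "B < x"
  shows "bounded_dsets d B \<subseteq> {v \<in> dsets d. sq_less v u}"
proof
  fix v assume v: "v \<in> bounded_dsets d B"
  have v_le: "y \<le> B" "finite v" if "y \<in> v" for y
    using v that unfolding bounded_dsets_def dsets_def by auto
  have "x \<le> Max u" using u by simp
  then have "Max u \<notin> v" using v_le u(3) by fastforce
  moreover have "Max ((v - u) \<union> (u - v)) = Max u"
  proof (rule Max_eqI)
    show "finite ((v - u) \<union> (u - v))"
      using u(1) v unfolding bounded_dsets_def dsets_def by auto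
    show "y \<le> Max u" if "y \<in> (v - u) \<union> (u - v)" for y
    proof (cases "y \<in> v")
      case True
      then show ?thesis using v_le u(3) \<open>x \<le> Max u\<close> by fastforce
    qed (use that u(1) in simp)
    show "Max u \<in> (v - u) \<union> (u - v)"
      using \<open>Max u \<notin> v\<close> Max_in[OF u(1)] u(2) by auto
  qed
  moreover have "Max u \<in> u" using Max_in[OF u(1)] u(2) by auto
  ultimately have "sq_less v u" unfolding sq_less_def by auto
  then show "v \<in> {v \<in> dsets d. sq_less v u}" using v unfolding bounded_dsets_def by blast
qed

lemma compr_image_mono_set:
  assumes G: "G \<subseteq> monomials (Suc d) T"
  shows "compr d (mono_set ` G) = mono_set ` revlex_seg (Suc d) T (card G)"
proof (intro set_eqI iffI)
  have card_G: "card (mono_set ` G) = card G"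
    using card_image[OF inj_on_subset[OF inj_on_mono_set G]] .
  have card_le: "card G \<le> card (monomials (Suc d) T)" by (rule card_mono[OF finite_monomials G])
  fix u assume "u \<in> compr d (mono_set ` G)"
  then have u: "u \<in> dsets d" "card {v \<in> dsets d. sq_less v u} < card G"
    unfolding compr_def card_G by auto
  have "u \<in> bounded_dsets d (T + d)"
  proof (rule ccontr)
    assume "u \<notin> bounded_dsets d (T + d)"
    then obtain x where "x \<in> u" "T + d < x" using u(1) unfolding bounded_dsets_def by auto
    then have "card (bounded_dsets d (T + d)) \<le> card {v \<in> dsets d. sq_less v u}"
      using u(1) finite_sq_less_pred bounded_dsets_subset_sq_less unfolding dsets_def
      by (metis (no_types, lifting) card_mono mem_Collect_eq)
    moreover have "card (bounded_dsets d (T + d)) = card (monomials (Suc d) T)"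
      using image_mono_set card_image[OF inj_on_mono_set] by metis
    ultimately show False using u(2) card_le by linarith
  qed
  then obtain c where c: "c \<in> monomials (Suc d) T" "mono_set c = u"
    using bounded_dsets_subset_image_mono_set by blast
  then have "revlex_rank (Suc d) T c < card G" using card_sq_less_mono_set[OF c(1)] u(2) by simp
  then show "u \<in> mono_set ` revlex_seg (Suc d) T (card G)"
    using c unfolding revlex.initial_seg_def by blast
next
  fix u assume "u \<in> mono_set ` revlex_seg (Suc d) T (card G)"
  then obtain c where c: "c \<in> monomials (Suc d) T" "revlex_rank (Suc d) T c < card G"
      "u = mono_set c"
    unfolding revlex.initial_seg_def by blast
  moreover have "card (mono_set ` G) = card G"
    using card_image[OF inj_on_subset[OF inj_on_mono_set G]] .
  moreover have "u \<in> dsets d" using mono_set_bounded[OF c(1)] c(3)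
    unfolding bounded_dsets_def by blast
  ultimately show "u \<in> compr d (mono_set ` G)"
    unfolding compr_def using card_sq_less_mono_set by simp
qed

lemma le_of_bounded_dsets: "u \<in> bounded_dsets d m \<Longrightarrow> d \<le> m"
proof -
  assume u: "u \<in> bounded_dsets d m"
  then have "u \<subseteq> {1..m}" unfolding bounded_dsets_def dsets_def
    by (auto simp: Suc_le_eq intro: Nat.gr0I)
  then have "card u \<le> card {1..m}" by (intro card_mono) auto
  then show ?thesis using u unfolding bounded_dsets_def dsets_def by simp
qed

lemma IncF_compr_subset:
  assumes F: "F \<subseteq> bounded_dsets d m"
  shows "IncF (compr d F) \<subseteq> compr d (IncF F)"
proof (cases "F = {}")
  case True
  then show ?thesis unfolding compr_def IncF_def by simp
next
  case False
  then have "d \<le> m" using F le_of_bounded_dsets by blast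
  define T where "T = m - d"
  define G where "G = {c \<in> monomials (Suc d) T. mono_set c \<in> F}"
  have G: "G \<subseteq> monomials (Suc d) T" unfolding G_def by blast
  have "F \<subseteq> mono_set ` monomials (Suc d) T"
    using F image_mono_set[of d T] \<open>d \<le> m\<close> unfolding T_def by simp
  then have F_eq: "F = mono_set ` G" unfolding G_def by blast
  let ?L = "revlex_seg (Suc d) T (card G)"
  have L: "?L \<subseteq> monomials (Suc d) T" by (rule revlex.initial_seg_subset)
  have "IncF (compr d F) = mono_set ` shadow ?L"
    unfolding F_eq compr_image_mono_set[OF G] by (rule IncF_image_mono_set[OF L])
  also have "shadow ?L = revlex_seg (Suc d) (Suc T) (card (shadow ?L))"
    by (rule revlex.down_closed_eq_initial_seg[OF revlex_closed_shadow_seg])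
  also have "mono_set ` revlex_seg (Suc d) (Suc T) (card (shadow ?L))
      \<subseteq> mono_set ` revlex_seg (Suc d) (Suc T) (card (shadow G))"
    using macaulay_theorem[of "Suc d"] G card_revlex_seg_le[OF card_mono[OF finite_monomials G]]
    unfolding macaulay_holds_def by (intro image_mono revlex.initial_seg_mono) auto
  also have "\<dots> = compr d (IncF F)"
    unfolding F_eq IncF_image_mono_set[OF G] compr_image_mono_set[OF shadow_monomials[OF G]] ..
  finally show ?thesis .
qed

lemma faces_Inc_cx: "1 \<le> d \<Longrightarrow> (\<forall>F\<in>\<Delta>. finite F \<and> 0 \<notin> F) \<Longrightarrow>
    faces d (Inc_cx \<Delta>) = IncF (faces d \<Delta>)"
proof -
  assume d: "1 \<le> d" and D: "\<forall>F\<in>\<Delta>. finite F \<and> 0 \<notin> F"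
  have cardI: "finite w \<and> card w = d'" if wI: "w \<in> IncF (faces d' \<Delta>)" for w d'
  proof -
    obtain u \<pi> where u: "w = \<pi> ` u" "u \<in> faces d' \<Delta>" "\<pi> \<in> Inc1" using wI unfolding IncF_def by blast
    then have "finite u" "0 \<notin> u" "card u = d'" using D unfolding faces_def by auto
    then show ?thesis using u card_image[OF inj_on_Inc1] by simp
  qed
  show ?thesis
  proof (intro set_eqI iffI)
    fix w assume "w \<in> faces d (Inc_cx \<Delta>)"
    then have w: "w \<in> Inc_cx \<Delta>" "finite w" "card w = d" unfolding faces_def by auto
    then have "w \<noteq> {}" using d by auto
    then obtain d' where "w \<in> IncF (faces d' \<Delta>)" using w unfolding Inc_cx_def by auto
    moreover then have "d' = d" using cardI w by metis
    ultimately show "w \<in> IncF (faces d \<Delta>)" by simp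
  next
    fix w assume w: "w \<in> IncF (faces d \<Delta>)"
    then have "w \<in> Inc_cx \<Delta>" unfolding Inc_cx_def using d by auto
    then show "w \<in> faces d (Inc_cx \<Delta>)" using cardI[OF w] unfolding faces_def by auto
  qed
qed

lemma faces_compr_cx: "1 \<le> d \<Longrightarrow> faces d (compr_cx \<Delta>) = compr d (faces d \<Delta>)"
proof (intro set_eqI iffI)
  fix w assume d: "1 \<le> d" and "w \<in> faces d (compr_cx \<Delta>)"
  then have w: "w \<in> compr_cx \<Delta>" "finite w" "card w = d" unfolding faces_def by auto
  then have "w \<noteq> {}" using d by auto
  then obtain d' where w': "w \<in> compr d' (faces d' \<Delta>)" using w unfolding compr_cx_def by auto
  then have "card w = d'" unfolding compr_def dsets_def by auto
  then show "w \<in> compr d (faces d \<Delta>)" using w w' by simp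
next
  fix w assume d: "1 \<le> d" and w: "w \<in> compr d (faces d \<Delta>)"
  then have "w \<in> compr_cx \<Delta>" unfolding compr_cx_def by auto
  moreover have "finite w" "card w = d" using w unfolding compr_def dsets_def by auto
  ultimately show "w \<in> faces d (compr_cx \<Delta>)" unfolding faces_def by auto
qed


theorem corollary4p2:
  fixes m :: nat and \<Delta> :: "nat set set"
  assumes "simplicial_complex_on m \<Delta>"
  shows "Inc_cx (compr_cx \<Delta>) \<subseteq> compr_cx (Inc_cx \<Delta>)"
proof
  have sub: "\<forall>F\<in>\<Delta>. F \<subseteq> {1..m}" using assms unfolding simplicial_complex_on_def by blast
  then have faces: "\<forall>F\<in>\<Delta>. finite F \<and> 0 \<notin> F"
    by (meson atLeastAtMost_iff finite_atLeastAtMost finite_subset not_one_le_zero subsetD)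
  have bounded: "faces d \<Delta> \<subseteq> bounded_dsets d m" for d
    unfolding faces_def bounded_dsets_def dsets_def using sub faces by fastforce
  fix w assume "w \<in> Inc_cx (compr_cx \<Delta>)"
  then consider "w = {}" | d where "1 \<le> d" "w \<in> IncF (faces d (compr_cx \<Delta>))"
    unfolding Inc_cx_def by auto
  then show "w \<in> compr_cx (Inc_cx \<Delta>)"
  proof cases
    case 1 then show ?thesis unfolding compr_cx_def by simp
  next
    case (2 d)
    then have "w \<in> IncF (compr d (faces d \<Delta>))" using faces_compr_cx by simp
    then have "w \<in> compr d (IncF (faces d \<Delta>))" using IncF_compr_subset[OF bounded] by blast
    then have "w \<in> compr d (faces d (Inc_cx \<Delta>))" using faces_Inc_cx[OF 2(1) faces] by simp
    then show ?thesis unfolding compr_cx_def using 2(1) by auto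
  qed
qed

end
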